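(* Let $T\subseteq\mathbb{R}^k$ and let $f : U \to \mathbb{R}$, where $U \subseteq T \times (0,1)^m$ and for each $t \in T$ the fibre $U_t=\{x\mid (t,x)\in U\}$ is an open subset of $(0,1)^m$, be prepared in $x$: $f(t,x) = b_j(t,x) F(b(t,x))$, where $b : U \to \mathbb{R}^N$ is a bounded monomial map, $b_j$ is one of its component functions, and $F$ is analytic and non-vanishing on an open neighbourhood of the closure of $\operatorname{im}(b)$. Then there exist $A_f, B_f > 0$ such that for all $\nu \in \mathbb{N}^m$, $t \in T$ and $x \in U_t$, \[ \left| f_t^{(\nu)}(x) \right| \leq x^{-\nu}\, |b_{t,j}(x)|\, B_f A_f^{|\nu|}\, |\nu|!. \]
   Context: A set or function is power-subanalytic if definable in an o-minimal structure $\mathbb{R}^K_{\mathcal{F}}$ ($\mathcal{F}$ a Weierstrass system, $K$ a subfield of its field of exponents). A function $b : U \subseteq T \times (0,1)^m \to \mathbb{R}$ is a bounded monomial map if it has bounded range and $b(t,x) = a(t) x^{\mu}$ for some power-subanalytic function $a$ and some $\mu \in \mathbb{R}^m$; a map into $\mathbb{R}^N$ is bounded monomial if each component is. Notation: $f_t(x)=f(t,x)$, $b_{t,j}(x)=b_j(t,x)$; $f_t^{(\nu)}$ is the partial derivative in $x$ of multi-order $\nu$, $|\nu|=\nu_1+\dots+\nu_m$, $\nu! = \nu_1!\cdots\nu_m!$, and $x^{-\nu} = x_1^{-\nu_1}\cdots x_m^{-\nu_m}$. *)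

theory Defs
  imports "HOL-Analysis.Analysis"
begin

definition real_analytic_on :: "(real^'n \<Rightarrow> real) \<Rightarrow> (real^'n) set \<Rightarrow> bool" where
  "real_analytic_on F W \<longleftrightarrow>
     (\<forall>y\<in>W. \<exists>r>0. \<exists>c :: ('n \<Rightarrow> nat) \<Rightarrow> real.
        \<forall>z\<in>ball y r. ((\<lambda>\<alpha>. c \<alpha> * (\<Prod>i\<in>UNIV. (z$i - y$i) ^ \<alpha> i)) has_sum F z) UNIV)"

definition monom_pow :: "real^'m \<Rightarrow> real^'m \<Rightarrow> real" where
  "monom_pow x \<mu> = (\<Prod>l\<in>UNIV. (x$l) powr (\<mu>$l))"

text \<open>Bounded monomial map on U (definability of the coefficients is not recorded).\<close>
definition bounded_monomial_map ::
  "((real^'k) \<times> (real^'m)) set \<Rightarrow> (real^'k \<Rightarrow> real^'m \<Rightarrow> real^'n) \<Rightarrow> bool" where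
  "bounded_monomial_map U b \<longleftrightarrow>
     bounded ((\<lambda>(t,x). b t x) ` U) \<and>
     (\<forall>i. \<exists>(a :: real^'k \<Rightarrow> real) (\<mu> :: real^'m).
        \<forall>(t,x)\<in>U. b t x $ i = a t * monom_pow x \<mu>)"

definition partial_deriv :: "'m \<Rightarrow> (real^'m \<Rightarrow> real) \<Rightarrow> real^'m \<Rightarrow> real" where
  "partial_deriv i g x = deriv (\<lambda>s. g (x + s *\<^sub>R axis i 1)) 0"

text \<open>Iterated partial derivative along a list of coordinate directions; the list L
realises the multi-index nu with nu i = count_list L i and |nu| = length L.\<close>
fun iter_partial :: "'m list \<Rightarrow> (real^'m \<Rightarrow> real) \<Rightarrow> real^'m \<Rightarrow> real" where
  "iter_partial [] g = g"
| "iter_partial (i # is) g = partial_deriv i (iter_partial is g)"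

end

theory Submission
  imports Defs
begin

text \<open>Near a point x of a fibre, the monomial form of b gives
b_i(t,x') = b_i(t,x) (x'/x)^\<mu>_i, and on the polydisc of polyradius r x about x each factor
(x'_l/x_l)^a is a binomial series whose absolute coefficient sum tends to 1 as r \<rightarrow> 0.
For r small, uniformly in (t,x), the point b(t,x') therefore stays so close to b(t,x) that
substituting it into one of the finitely many local power series of F covering the compact
closure of the image of b yields a power series about x whose absolute coefficient sum on the
polydisc is at most |b_j(t,x)| B. The Cauchy estimate for this power series bounds the
\<nu>-th derivative at x by \<nu>! |b_j(t,x)| B / (r x)^\<nu>, and \<nu>! \<le> |\<nu>|!.\<close>

lemma has_sum_diff:
  fixes f g :: "'a \<Rightarrow> 'b::topological_ab_group_add"
  assumes "(f has_sum a) A" "(g has_sum b) A"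
  shows "((\<lambda>x. f x - g x) has_sum (a - b)) A"
proof -
  have "((\<lambda>x. - g x) has_sum - b) A" using assms(2) by (simp add: has_sum_uminus)
  from has_sum_add[OF assms(1) this] show ?thesis by simp
qed

lemma has_sum_abs_le:
  fixes f g :: "'a \<Rightarrow> real"
  assumes f: "(f has_sum a) A" and g: "(g has_sum b) A" and le: "\<And>x. x \<in> A \<Longrightarrow> \<bar>f x\<bar> \<le> g x"
  shows "\<bar>a\<bar> \<le> b"
proof -
  have "a \<le> b"
    by (rule has_sum_mono[OF f g]) (meson abs_le_D1 le)
  moreover have "((\<lambda>x. - f x) has_sum - a) A"
    using f by (simp add: has_sum_uminus)
  then have "-a \<le> b"
    by (rule has_sum_mono[OF _ g]) (meson abs_le_D2 le)
  ultimately show ?thesis by linarith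
qed

lemma has_sum_comparison:
  fixes f g :: "'a \<Rightarrow> real"
  assumes "(g has_sum T) A" "\<And>x. x \<in> A \<Longrightarrow> 0 \<le> f x" "\<And>x. x \<in> A \<Longrightarrow> f x \<le> g x"
  obtains S where "(f has_sum S) A" "S \<le> T"
proof -
  have "f summable_on A"
    using summable_on_comparison_test[OF has_sum_imp_summable[OF assms(1)]] assms(2,3) by blast
  then have "(f has_sum infsum f A) A" by simp
  moreover have "infsum f A \<le> T"
    using has_sum_mono[OF calculation assms(1)] assms(3) by blast
  ultimately show ?thesis by (rule that)
qed

lemma has_sum_product:
  fixes f :: "'a \<Rightarrow> real" and g :: "'b \<Rightarrow> real"
  assumes f: "(f has_sum a) A" "(\<lambda>x. \<bar>f x\<bar>) summable_on A"
    and g: "(g has_sum b) B" "(\<lambda>y. \<bar>g y\<bar>) summable_on B"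
  shows "((\<lambda>(x,y). f x * g y) has_sum (a * b)) (A \<times> B)"
proof -
  have "(\<lambda>p. \<bar>f (fst p)\<bar> * \<bar>g (snd p)\<bar>) summable_on Sigma A (\<lambda>_. B)"
  proof (rule summable_on_SigmaI)
    show "((\<lambda>y. \<bar>f (fst (x,y))\<bar> * \<bar>g (snd (x,y))\<bar>) has_sum \<bar>f x\<bar> * infsum (\<lambda>y. \<bar>g y\<bar>) B) B" for x
      using has_sum_cmult_right[OF has_sum_infsum[OF g(2)], of "\<bar>f x\<bar>"] by simp
    show "(\<lambda>x. \<bar>f x\<bar> * infsum (\<lambda>y. \<bar>g y\<bar>) B) summable_on A"
      using summable_on_cmult_left[OF f(2)] by blast
  qed auto
  then have "(\<lambda>p. norm ((\<lambda>(x,y). f x * g y) p)) summable_on (A \<times> B)"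
    by (simp add: case_prod_unfold abs_mult)
  then have summable: "(\<lambda>(x,y). f x * g y) summable_on Sigma A (\<lambda>_. B)"
    by (simp add: abs_summable_summable)
  have "((\<lambda>p. (\<lambda>(x,y). f x * g y) p) has_sum (a * b)) (Sigma A (\<lambda>_. B))"
  proof (rule has_sum_SigmaI[OF _ _ summable])
    show "((\<lambda>y. (\<lambda>(x,y). f x * g y) (x, y)) has_sum f x * b) B" for x
      using has_sum_cmult_right[OF g(1), of "f x"] by simp
    show "((\<lambda>x. f x * b) has_sum a * b) A" using has_sum_cmult_left[OF f(1)] .
  qed
  then show ?thesis by simp
qed

lemma has_sum_swap_inner:
  fixes K :: "'a \<Rightarrow> 'b \<Rightarrow> real"
  assumes K: "(\<lambda>(a,b). K a b) summable_on UNIV \<times> UNIV" and rows: "\<And>a. (K a has_sum g a) UNIV"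
  shows "\<And>b. (\<lambda>a. K a b) summable_on UNIV"
    and "((\<lambda>b. \<Sum>\<^sub>\<infinity>a. K a b) has_sum (\<Sum>\<^sub>\<infinity>a. g a)) UNIV"
proof -
  define S where "S = (\<Sum>\<^sub>\<infinity>(a,b)\<in>UNIV \<times> UNIV. K a b)"
  have KS: "((\<lambda>(a,b). K a b) has_sum S) (UNIV \<times> UNIV)"
    using K unfolding S_def by (rule has_sum_infsum)
  have "(g has_sum S) UNIV"
    by (rule has_sum_SigmaD[OF KS]) (use rows in simp)
  then have gS: "(\<Sum>\<^sub>\<infinity>a. g a) = S" by (rule infsumI)
  have KS': "((\<lambda>(b,a). K a b) has_sum S) (UNIV \<times> UNIV)"
    using KS has_sum_swap[of "\<lambda>(a,b). K a b" UNIV UNIV S] by simp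
  show cols: "(\<lambda>a. K a b) summable_on UNIV" for b
    using summable_on_SigmaD1[OF has_sum_imp_summable[OF KS'], of b] by simp
  show "((\<lambda>b. \<Sum>\<^sub>\<infinity>a. K a b) has_sum (\<Sum>\<^sub>\<infinity>a. g a)) UNIV"
    unfolding gS by (rule has_sum_SigmaD[OF KS']) (use cols in simp)
qed

definition multi_power :: "real^'m \<Rightarrow> ('m \<Rightarrow> nat) \<Rightarrow> real" where
  "multi_power x \<alpha> = (\<Prod>l\<in>UNIV. (x$l) ^ \<alpha> l)"

definition polydisc :: "real^'m \<Rightarrow> real^'m \<Rightarrow> (real^'m) set" where
  "polydisc c R = {x. \<forall>l. \<bar>x$l - c$l\<bar> < R$l}"

lemma multi_power_zero_index [simp]: "multi_power x (\<lambda>_. 0) = 1"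
  by (simp add: multi_power_def)

lemma multi_power_zero: "multi_power 0 \<alpha> = (if \<alpha> = (\<lambda>_. 0) then 1 else 0)"
proof (cases "\<alpha> = (\<lambda>_. 0)")
  case False
  then obtain l where "\<alpha> l \<noteq> 0" by auto
  then show ?thesis
    using False unfolding multi_power_def by (intro trans[OF prod_zero]) (auto intro!: bexI[of _ l])
qed simp

lemma multi_power_nonneg: "(\<And>l. 0 \<le> R$l) \<Longrightarrow> 0 \<le> multi_power R \<alpha>"
  unfolding multi_power_def by (intro prod_nonneg) auto

lemma multi_power_pos: "(\<And>l. 0 < R$l) \<Longrightarrow> 0 < multi_power R \<alpha>"
  unfolding multi_power_def by (intro prod_pos) auto

lemma abs_multi_power_le: "(\<And>l. \<bar>x$l\<bar> \<le> R$l) \<Longrightarrow> \<bar>multi_power x \<alpha>\<bar> \<le> multi_power R \<alpha>"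
  unfolding multi_power_def abs_prod power_abs
  by (intro prod_mono conjI power_mono) auto

lemma multi_power_add_index:
  "multi_power x (\<lambda>l. \<alpha> l + \<beta> l) = multi_power x \<alpha> * multi_power x \<beta>"
  unfolding multi_power_def by (simp add: power_add prod.distrib)

lemma multi_power_single_index: "multi_power x ((\<lambda>_. 0)(l := k)) = (x$l) ^ k"
proof -
  have "multi_power x ((\<lambda>_. 0)(l := k)) = (\<Prod>l'\<in>UNIV. if l' = l then (x$l) ^ k else 1)"
    unfolding multi_power_def by (intro prod.cong) auto
  then show ?thesis by simp
qed

lemma multi_power_split:
  "multi_power x \<alpha> = (x$i) ^ \<alpha> i * (\<Prod>l\<in>-{i}. (x$l) ^ \<alpha> l)"
  unfolding multi_power_def using prod.remove[of UNIV i] by (simp add: Compl_eq_Diff_UNIV)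

lemma multi_power_count_list:
  fixes L :: "'m::finite list"
  shows "multi_power (r *\<^sub>R x) (\<lambda>l. count_list L l) = r ^ length L * (\<Prod>l\<in>UNIV. (x$l) ^ count_list L l)"
proof -
  have "multi_power (r *\<^sub>R x) (\<lambda>l. count_list L l) = r ^ (\<Sum>l\<in>UNIV. count_list L l) * (\<Prod>l\<in>UNIV. (x$l) ^ count_list L l)"
    unfolding multi_power_def by (simp add: power_mult_distrib prod.distrib power_sum)
  then show ?thesis by (simp add: sum_count_set)
qed

lemma centre_in_polydisc: "(\<And>l. 0 < R$l) \<Longrightarrow> c \<in> polydisc c R"
  by (simp add: polydisc_def)

lemma open_polydisc: "open (polydisc c R)"
proof -
  have "polydisc c R = (\<Inter>l. {x. \<bar>x$l - c$l\<bar> < R$l})"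
    unfolding polydisc_def by auto
  also have "open \<dots>"
    by (intro open_INT ballI open_Collect_less continuous_intros) simp
  finally show ?thesis .
qed

lemma has_sum_zero_index:
  fixes f :: "('m \<Rightarrow> nat) \<Rightarrow> real"
  assumes "\<And>\<alpha>. \<alpha> \<noteq> (\<lambda>_. 0) \<Longrightarrow> f \<alpha> = 0"
  shows "(f has_sum f (\<lambda>_. 0)) UNIV"
proof -
  have "(f has_sum f (\<lambda>_. 0)) {\<lambda>_. 0}" by (rule has_sum_finiteI) simp_all
  then show ?thesis
    by (rule has_sum_cong_neutral[of UNIV "{\<lambda>_. 0}" f f, THEN iffD1, rotated -1]) (use assms in auto)
qed

definition index_splits :: "('m \<Rightarrow> nat) \<Rightarrow> (('m \<Rightarrow> nat) \<times> ('m \<Rightarrow> nat)) set" where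
  "index_splits \<gamma> = {(\<alpha>, \<beta>). \<forall>l. \<alpha> l + \<beta> l = \<gamma> l}"

lemma finite_index_splits: "finite (index_splits (\<gamma> :: 'm::finite \<Rightarrow> nat))"
proof -
  have "{\<alpha> :: 'm \<Rightarrow> nat. \<forall>l. \<alpha> l \<le> \<gamma> l} = PiE UNIV (\<lambda>l. {..\<gamma> l})"
    by (auto simp: PiE_def Pi_def extensional_def)
  then have fin: "finite {\<alpha> :: 'm \<Rightarrow> nat. \<forall>l. \<alpha> l \<le> \<gamma> l}"
    by (simp add: finite_PiE)
  have "index_splits \<gamma> \<subseteq> {\<alpha>. \<forall>l. \<alpha> l \<le> \<gamma> l} \<times> {\<alpha>. \<forall>l. \<alpha> l \<le> \<gamma> l}"
  proof
    fix p assume "p \<in> index_splits \<gamma>"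
    then have "\<gamma> l = fst p l + snd p l" for l
      unfolding index_splits_def by (simp add: case_prod_beta)
    then show "p \<in> {\<alpha>. \<forall>l. \<alpha> l \<le> \<gamma> l} \<times> {\<alpha>. \<forall>l. \<alpha> l \<le> \<gamma> l}"
      by (simp add: mem_Times_iff)
  qed
  then show ?thesis using fin by (auto intro: finite_subset)
qed

lemma multi_power_index_splits:
  assumes "p \<in> index_splits \<gamma>"
  shows "multi_power x (fst p) * multi_power x (snd p) = multi_power x \<gamma>"
proof -
  have "\<gamma> = (\<lambda>l. fst p l + snd p l)"
    using assms unfolding index_splits_def by (cases p) auto
  then show ?thesis by (simp add: multi_power_add_index)
qed

lemma has_sum_index_splits:
  fixes G :: "('m::finite \<Rightarrow> nat) \<times> ('m \<Rightarrow> nat) \<Rightarrow> real"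
  assumes "(G has_sum S) UNIV"
  shows "((\<lambda>\<gamma>. \<Sum>p\<in>index_splits \<gamma>. G p) has_sum S) UNIV"
proof -
  define h where "h = (\<lambda>p :: ('m \<Rightarrow> nat) \<times> ('m \<Rightarrow> nat). ((\<lambda>l. fst p l + snd p l), p))"
  have "inj h" unfolding h_def by (auto intro: inj_onI)
  moreover have "range h = Sigma UNIV index_splits"
    unfolding h_def index_splits_def by (auto simp: image_iff)
  ultimately have "((G \<circ> snd) has_sum S) (Sigma UNIV index_splits)"
    using has_sum_reindex[of h UNIV "G \<circ> snd" S] assms by (simp add: h_def o_def)
  then show ?thesis
    by (rule has_sum_Sigma') (auto intro!: has_sum_finiteI finite_index_splits)
qed

lemma has_sum_index_splits_product:
  fixes f g :: "('m::finite \<Rightarrow> nat) \<Rightarrow> real"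
  assumes "(f has_sum a) UNIV" "(\<lambda>\<alpha>. \<bar>f \<alpha>\<bar>) summable_on UNIV"
    and "(g has_sum b) UNIV" "(\<lambda>\<alpha>. \<bar>g \<alpha>\<bar>) summable_on UNIV"
  shows "((\<lambda>\<gamma>. \<Sum>p\<in>index_splits \<gamma>. f (fst p) * g (snd p)) has_sum a * b) UNIV"
proof -
  have "((\<lambda>p. f (fst p) * g (snd p)) has_sum a * b) UNIV"
    using has_sum_product[OF assms] by (simp add: case_prod_unfold)
  then show ?thesis by (rule has_sum_index_splits)
qed

lemma has_sum_reindex_single_index:
  fixes h :: "('m \<Rightarrow> nat) \<Rightarrow> real"
  assumes "\<And>\<alpha>. \<alpha> \<notin> range (\<lambda>k. (\<lambda>_. 0)(l := k)) \<Longrightarrow> h \<alpha> = 0"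
  shows "(h has_sum s) UNIV \<longleftrightarrow> ((\<lambda>k. h ((\<lambda>_. 0)(l := k))) has_sum s) UNIV"
proof -
  have inj: "inj (\<lambda>k. (\<lambda>_. 0 :: nat)(l := k))" by (rule injI) (metis fun_upd_same)
  have "(h has_sum s) UNIV \<longleftrightarrow> (h has_sum s) (range (\<lambda>k. (\<lambda>_. 0)(l := k)))"
    by (rule has_sum_cong_neutral) (use assms in auto)
  also have "\<dots> \<longleftrightarrow> ((\<lambda>k. h ((\<lambda>_. 0)(l := k))) has_sum s) UNIV"
    using has_sum_reindex[OF inj] by (simp add: o_def)
  finally show ?thesis .
qed

lemma inj_Suc_index: "inj (\<lambda>\<beta>. \<beta>(i := Suc (\<beta> i)))"
proof (rule injI, rule ext)
    fix a b :: "_ \<Rightarrow> nat" and l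
    assume "a(i := Suc (a i)) = b(i := Suc (b i))"
    then have "(a(i := Suc (a i))) l = (b(i := Suc (b i))) l" "(a(i := Suc (a i))) i = (b(i := Suc (b i))) i"
      by simp_all
    then show "a l = b l" by (cases "l = i") auto
qed

lemma has_sum_reindex_Suc_index:
  fixes g :: "('m \<Rightarrow> nat) \<Rightarrow> real"
  assumes "\<And>\<alpha>. \<alpha> i = 0 \<Longrightarrow> g \<alpha> = 0"
  shows "(g has_sum S) UNIV \<longleftrightarrow> ((\<lambda>\<beta>. g (\<beta>(i := Suc (\<beta> i)))) has_sum S) UNIV"
proof -
  have "range (\<lambda>\<beta>. \<beta>(i := Suc (\<beta> i))) = {\<alpha>. \<alpha> i \<noteq> 0}"
  proof (intro equalityI subsetI)
    fix \<alpha> :: "'m \<Rightarrow> nat" assume "\<alpha> \<in> {\<alpha>. \<alpha> i \<noteq> 0}"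
    then have "\<alpha> = (\<alpha>(i := \<alpha> i - 1))(i := Suc ((\<alpha>(i := \<alpha> i - 1)) i))" by auto
    then show "\<alpha> \<in> range (\<lambda>\<beta>. \<beta>(i := Suc (\<beta> i)))" by blast
  qed auto
  then have "(g has_sum S) UNIV \<longleftrightarrow> (g has_sum S) (range (\<lambda>\<beta>. \<beta>(i := Suc (\<beta> i))))"
    by (intro has_sum_cong_neutral) (use assms in auto)
  also have "\<dots> \<longleftrightarrow> ((\<lambda>\<beta>. g (\<beta>(i := Suc (\<beta> i)))) has_sum S) UNIV"
    using has_sum_reindex[OF inj_Suc_index] by (simp add: o_def)
  finally show ?thesis .
qed

section \<open>Majorants of power series\<close>

definition majorized :: "real^'m \<Rightarrow> real^'m \<Rightarrow> (real^'m \<Rightarrow> real) \<Rightarrow> real \<Rightarrow> bool" where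
  "majorized c R f M \<longleftrightarrow> (\<forall>l. 0 < R$l) \<and>
     (\<exists>d S. ((\<lambda>\<alpha>. \<bar>d \<alpha>\<bar> * multi_power R \<alpha>) has_sum S) UNIV \<and> S \<le> M \<and>
        (\<forall>x\<in>polydisc c R. ((\<lambda>\<alpha>. d \<alpha> * multi_power (x - c) \<alpha>) has_sum f x) UNIV))"

lemma majorizedI:
  assumes "\<And>l. 0 < R$l" "((\<lambda>\<alpha>. \<bar>d \<alpha>\<bar> * multi_power R \<alpha>) has_sum S) UNIV" "S \<le> M"
    "\<And>x. x \<in> polydisc c R \<Longrightarrow> ((\<lambda>\<alpha>. d \<alpha> * multi_power (x - c) \<alpha>) has_sum f x) UNIV"
  shows "majorized c R f M"
  using assms unfolding majorized_def by blast

lemma majorizedE: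
  assumes "majorized c R f M"
  obtains d S where "\<And>l. 0 < R$l" "((\<lambda>\<alpha>. \<bar>d \<alpha>\<bar> * multi_power R \<alpha>) has_sum S) UNIV" "S \<le> M"
    "\<And>x. x \<in> polydisc c R \<Longrightarrow> ((\<lambda>\<alpha>. d \<alpha> * multi_power (x - c) \<alpha>) has_sum f x) UNIV"
  using assms unfolding majorized_def by blast

lemma weighted_sum_nonneg:
  "((\<lambda>\<alpha>. \<bar>d \<alpha>\<bar> * multi_power R \<alpha>) has_sum S) A \<Longrightarrow> (\<And>l. 0 \<le> R$l) \<Longrightarrow> 0 \<le> S"
  by (erule has_sum_nonneg) (simp add: multi_power_nonneg)

lemma majorized_radius_pos: "majorized c R f M \<Longrightarrow> 0 < R$l"
  unfolding majorized_def by blast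

lemma majorized_bound_nonneg: "majorized c R f M \<Longrightarrow> 0 \<le> M"
  by (elim majorizedE, drule weighted_sum_nonneg) (auto simp: less_imp_le)

lemma abs_power_series_term_le:
  "(\<And>l. \<bar>x$l - c$l\<bar> \<le> R$l) \<Longrightarrow> \<bar>d \<alpha> * multi_power (x - c) \<alpha>\<bar> \<le> \<bar>d \<alpha>\<bar> * multi_power R \<alpha>"
  unfolding abs_mult by (intro mult_left_mono abs_multi_power_le) auto

lemma abs_summable_power_series:
  assumes "((\<lambda>\<alpha>. \<bar>d \<alpha>\<bar> * multi_power R \<alpha>) has_sum S) UNIV" "\<And>l. \<bar>x$l - c$l\<bar> \<le> R$l"
  shows "(\<lambda>\<alpha>. \<bar>d \<alpha> * multi_power (x - c) \<alpha>\<bar>) summable_on UNIV"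
  by (rule summable_on_comparison_test[OF has_sum_imp_summable[OF assms(1)]])
     (use abs_power_series_term_le[OF assms(2)] in auto)

lemma majorized_abs_le:
  assumes "majorized c R f M" "x \<in> polydisc c R"
  shows "\<bar>f x\<bar> \<le> M"
proof -
  obtain d S where d: "((\<lambda>\<alpha>. \<bar>d \<alpha>\<bar> * multi_power R \<alpha>) has_sum S) UNIV" "S \<le> M"
      "((\<lambda>\<alpha>. d \<alpha> * multi_power (x - c) \<alpha>) has_sum f x) UNIV"
    using assms by (metis majorizedE)
  have "\<bar>f x\<bar> \<le> S"
    using assms(2) unfolding polydisc_def
    by (intro has_sum_abs_le[OF d(3) d(1)] abs_power_series_term_le) (simp add: less_imp_le)
  with d(2) show ?thesis by linarith
qed

lemma majorized_mono: "majorized c R f M \<Longrightarrow> M \<le> M' \<Longrightarrow> majorized c R f M'"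
  unfolding majorized_def by force

lemma majorized_cong:
  "majorized c R f M \<Longrightarrow> (\<And>x. x \<in> polydisc c R \<Longrightarrow> f x = g x) \<Longrightarrow> majorized c R g M"
  unfolding majorized_def by force

lemma majorized_const: "(\<And>l. 0 < R$l) \<Longrightarrow> majorized c R (\<lambda>_. a) \<bar>a\<bar>"
proof (rule majorizedI)
  define d where "d = (\<lambda>\<alpha>::'a \<Rightarrow> nat. if \<alpha> = (\<lambda>_. 0) then a else 0)"
  show "((\<lambda>\<alpha>. \<bar>d \<alpha>\<bar> * multi_power R \<alpha>) has_sum \<bar>a\<bar>) UNIV"
    using has_sum_zero_index[of "\<lambda>\<alpha>. \<bar>d \<alpha>\<bar> * multi_power R \<alpha>"] by (simp add: d_def)
  show "((\<lambda>\<alpha>. d \<alpha> * multi_power (x - c) \<alpha>) has_sum a) UNIV" for x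
    using has_sum_zero_index[of "\<lambda>\<alpha>. d \<alpha> * multi_power (x - c) \<alpha>"] by (simp add: d_def)
qed auto

lemma majorized_cmult:
  assumes "majorized c R f M"
  shows "majorized c R (\<lambda>x. a * f x) (\<bar>a\<bar> * M)"
proof -
  obtain d S where d: "\<And>l. 0 < R$l" "((\<lambda>\<alpha>. \<bar>d \<alpha>\<bar> * multi_power R \<alpha>) has_sum S) UNIV" "S \<le> M"
    "\<And>x. x \<in> polydisc c R \<Longrightarrow> ((\<lambda>\<alpha>. d \<alpha> * multi_power (x - c) \<alpha>) has_sum f x) UNIV"
    by (rule majorizedE[OF assms]) blast
  show ?thesis
  proof (rule majorizedI[OF d(1)])
    show "((\<lambda>\<alpha>. \<bar>a * d \<alpha>\<bar> * multi_power R \<alpha>) has_sum \<bar>a\<bar> * S) UNIV"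
      using has_sum_cmult_right[OF d(2), of "\<bar>a\<bar>"] by (simp add: abs_mult mult.assoc)
    show "\<bar>a\<bar> * S \<le> \<bar>a\<bar> * M" using d(3) by (simp add: mult_left_mono)
    show "((\<lambda>\<alpha>. a * d \<alpha> * multi_power (x - c) \<alpha>) has_sum a * f x) UNIV" if "x \<in> polydisc c R" for x
      using has_sum_cmult_right[OF d(4)[OF that], of a] by (simp add: mult.assoc)
  qed
qed

lemma majorized_add:
  assumes "majorized c R f M" "majorized c R g N"
  shows "majorized c R (\<lambda>x. f x + g x) (M + N)"
proof -
  obtain d S where d: "\<And>l. 0 < R$l" "((\<lambda>\<alpha>. \<bar>d \<alpha>\<bar> * multi_power R \<alpha>) has_sum S) UNIV" "S \<le> M"
    "\<And>x. x \<in> polydisc c R \<Longrightarrow> ((\<lambda>\<alpha>. d \<alpha> * multi_power (x - c) \<alpha>) has_sum f x) UNIV"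
    by (rule majorizedE[OF assms(1)]) blast
  obtain e T where e: "((\<lambda>\<alpha>. \<bar>e \<alpha>\<bar> * multi_power R \<alpha>) has_sum T) UNIV" "T \<le> N"
    "\<And>x. x \<in> polydisc c R \<Longrightarrow> ((\<lambda>\<alpha>. e \<alpha> * multi_power (x - c) \<alpha>) has_sum g x) UNIV"
    by (rule majorizedE[OF assms(2)]) blast
  have pos: "0 < multi_power R \<alpha>" for \<alpha> using multi_power_pos d(1) by blast
  obtain U where U: "((\<lambda>\<alpha>. \<bar>d \<alpha> + e \<alpha>\<bar> * multi_power R \<alpha>) has_sum U) UNIV" "U \<le> S + T"
  proof (rule has_sum_comparison[OF has_sum_add[OF d(2) e(1)]])
    show "\<bar>d \<alpha> + e \<alpha>\<bar> * multi_power R \<alpha> \<le> \<bar>d \<alpha>\<bar> * multi_power R \<alpha> + \<bar>e \<alpha>\<bar> * multi_power R \<alpha>" for \<alpha>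
      using pos[of \<alpha>] by (metis abs_triangle_ineq distrib_right less_imp_le mult_right_mono)
  qed (use pos in \<open>simp add: less_imp_le\<close>)
  show ?thesis
    by (rule majorizedI[OF d(1) U(1)]) (use U(2) d(3) e(2) in \<open>auto simp: distrib_right intro!: has_sum_add d(4) e(3)\<close>)
qed

lemma majorized_diff_centre_value:
  assumes "majorized c R f M"
  shows "majorized c R (\<lambda>x. f x - f c) (M - \<bar>f c\<bar>)"
proof -
  obtain d S where d: "\<And>l. 0 < R$l" "((\<lambda>\<alpha>. \<bar>d \<alpha>\<bar> * multi_power R \<alpha>) has_sum S) UNIV" "S \<le> M"
    "\<And>x. x \<in> polydisc c R \<Longrightarrow> ((\<lambda>\<alpha>. d \<alpha> * multi_power (x - c) \<alpha>) has_sum f x) UNIV"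
    by (rule majorizedE[OF assms]) blast
  let ?z = "(\<lambda>_. 0) :: 'a \<Rightarrow> nat"
  have "((\<lambda>\<alpha>. d \<alpha> * multi_power (c - c) \<alpha>) has_sum d ?z) UNIV"
    using has_sum_zero_index[of "\<lambda>\<alpha>. d \<alpha> * multi_power (c - c) \<alpha>"] by (simp add: multi_power_zero)
  then have fc: "f c = d ?z"
    using d(4)[OF centre_in_polydisc[OF d(1)]] has_sum_unique by blast
  show ?thesis
  proof (rule majorizedI[OF d(1)])
    have "((\<lambda>\<alpha>. \<bar>d \<alpha>\<bar> * multi_power R \<alpha> - (if \<alpha> = ?z then \<bar>d \<alpha>\<bar> * multi_power R \<alpha> else 0)) has_sum S - \<bar>d ?z\<bar>) UNIV"
      using has_sum_diff[OF d(2) has_sum_zero_index[of "\<lambda>\<alpha>. if \<alpha> = ?z then \<bar>d \<alpha>\<bar> * multi_power R \<alpha> else 0"]] by simp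
    then show "((\<lambda>\<alpha>. \<bar>(d(?z := 0)) \<alpha>\<bar> * multi_power R \<alpha>) has_sum S - \<bar>f c\<bar>) UNIV"
      unfolding fc by (rule has_sum_cong[THEN iffD1, rotated]) auto
    show "S - \<bar>f c\<bar> \<le> M - \<bar>f c\<bar>" using d(3) by simp
    fix x assume "x \<in> polydisc c R"
    then have "((\<lambda>\<alpha>. d \<alpha> * multi_power (x - c) \<alpha> - (if \<alpha> = ?z then d \<alpha> * multi_power (x - c) \<alpha> else 0)) has_sum f x - f c) UNIV"
      unfolding fc using has_sum_diff[OF d(4) has_sum_zero_index[of "\<lambda>\<alpha>. if \<alpha> = ?z then d \<alpha> * multi_power (x - c) \<alpha> else 0"]] by simp
    then show "((\<lambda>\<alpha>. (d(?z := 0)) \<alpha> * multi_power (x - c) \<alpha>) has_sum f x - f c) UNIV"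
      by (rule has_sum_cong[THEN iffD1, rotated]) auto
  qed
qed

lemma majorized_mult:
  assumes "majorized c R f M" "majorized c R g N"
  shows "majorized c R (\<lambda>x. f x * g x) (M * N)"
proof -
  obtain d S where d: "\<And>l. 0 < R$l" "((\<lambda>\<alpha>. \<bar>d \<alpha>\<bar> * multi_power R \<alpha>) has_sum S) UNIV" "S \<le> M"
    "\<And>x. x \<in> polydisc c R \<Longrightarrow> ((\<lambda>\<alpha>. d \<alpha> * multi_power (x - c) \<alpha>) has_sum f x) UNIV"
    by (rule majorizedE[OF assms(1)]) blast
  obtain e T where e: "((\<lambda>\<alpha>. \<bar>e \<alpha>\<bar> * multi_power R \<alpha>) has_sum T) UNIV" "T \<le> N"
    "\<And>x. x \<in> polydisc c R \<Longrightarrow> ((\<lambda>\<alpha>. e \<alpha> * multi_power (x - c) \<alpha>) has_sum g x) UNIV"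
    by (rule majorizedE[OF assms(2)]) blast
  have R: "0 \<le> R$l" for l using d(1) less_imp_le by blast
  have pos: "0 \<le> multi_power R \<alpha>" for \<alpha> using multi_power_nonneg R by blast
  define de where "de = (\<lambda>\<gamma>. \<Sum>p\<in>index_splits \<gamma>. d (fst p) * e (snd p))"
  have "((\<lambda>\<gamma>. \<Sum>p\<in>index_splits \<gamma>. (\<bar>d (fst p)\<bar> * multi_power R (fst p)) * (\<bar>e (snd p)\<bar> * multi_power R (snd p)))
      has_sum S * T) UNIV"
    by (rule has_sum_index_splits_product[OF d(2) _ e(1)])
       (use has_sum_imp_summable[OF d(2)] has_sum_imp_summable[OF e(1)] pos in \<open>simp_all add: abs_mult\<close>)
  then obtain U where U: "((\<lambda>\<gamma>. \<bar>de \<gamma>\<bar> * multi_power R \<gamma>) has_sum U) UNIV" "U \<le> S * T"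
  proof (rule has_sum_comparison)
    fix \<gamma>
    have "\<bar>de \<gamma>\<bar> \<le> (\<Sum>p\<in>index_splits \<gamma>. \<bar>d (fst p) * e (snd p)\<bar>)"
      unfolding de_def by (rule sum_abs)
    moreover have "(\<Sum>p\<in>index_splits \<gamma>. (\<bar>d (fst p)\<bar> * multi_power R (fst p)) * (\<bar>e (snd p)\<bar> * multi_power R (snd p)))
        = (\<Sum>p\<in>index_splits \<gamma>. \<bar>d (fst p) * e (snd p)\<bar>) * multi_power R \<gamma>"
      unfolding sum_distrib_right
      by (intro sum.cong refl) (auto simp: abs_mult multi_power_index_splits[symmetric])
    ultimately show "\<bar>de \<gamma>\<bar> * multi_power R \<gamma>
        \<le> (\<Sum>p\<in>index_splits \<gamma>. (\<bar>d (fst p)\<bar> * multi_power R (fst p)) * (\<bar>e (snd p)\<bar> * multi_power R (snd p)))"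
      using pos[of \<gamma>] by (simp add: mult_right_mono)
  qed (use pos in simp)
  have "S * T \<le> M * N"
    using d(3) e(2) weighted_sum_nonneg[OF d(2) R] weighted_sum_nonneg[OF e(1) R]
    by (intro mult_mono) auto
  show ?thesis
  proof (rule majorizedI[OF d(1) U(1)])
    show "U \<le> M * N" using U(2) \<open>S * T \<le> M * N\<close> by linarith
    fix x assume x: "x \<in> polydisc c R"
    then have x': "\<bar>x$l - c$l\<bar> \<le> R$l" for l unfolding polydisc_def by (simp add: less_imp_le)
    have "((\<lambda>\<gamma>. \<Sum>p\<in>index_splits \<gamma>. (d (fst p) * multi_power (x - c) (fst p)) * (e (snd p) * multi_power (x - c) (snd p)))
        has_sum f x * g x) UNIV"
      by (rule has_sum_index_splits_product[OF d(4)[OF x] abs_summable_power_series[OF d(2) x'] e(3)[OF x]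
            abs_summable_power_series[OF e(1) x']])
    then show "((\<lambda>\<gamma>. de \<gamma> * multi_power (x - c) \<gamma>) has_sum f x * g x) UNIV"
      unfolding de_def sum_distrib_right
      by (rule has_sum_cong[THEN iffD1, rotated])
         (intro sum.cong refl, auto simp: multi_power_index_splits[symmetric] mult_ac)
  qed
qed

lemma majorized_prod:
  assumes "finite S" "\<And>l. 0 < R$l" "\<And>s. s \<in> S \<Longrightarrow> majorized c R (f s) (M s)"
  shows "majorized c R (\<lambda>x. \<Prod>s\<in>S. f s x) (\<Prod>s\<in>S. M s)"
  using assms(1,3)
proof (induction S rule: finite_induct)
  case empty
  then show ?case using majorized_const[OF assms(2), of c 1] by simp
next
  case (insert s S)
  then show ?case using majorized_mult[of c R "f s" "M s"] by simp
qed

lemma majorized_power: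
  assumes "majorized c R f M"
  shows "majorized c R (\<lambda>x. f x ^ k) (M ^ k)"
  using majorized_prod[of "{..<k}" R c "\<lambda>_. f" "\<lambda>_. M"] assms majorized_radius_pos[OF assms]
  by simp

lemma majorized_choice:
  assumes "\<And>\<gamma>. majorized c R (g \<gamma>) (M \<gamma>)"
  obtains D S where "\<And>\<gamma>. ((\<lambda>\<alpha>. \<bar>D \<gamma> \<alpha>\<bar> * multi_power R \<alpha>) has_sum S \<gamma>) UNIV"
    "\<And>\<gamma>. S \<gamma> \<le> M \<gamma>"
    "\<And>\<gamma> x. x \<in> polydisc c R \<Longrightarrow> ((\<lambda>\<alpha>. D \<gamma> \<alpha> * multi_power (x - c) \<alpha>) has_sum g \<gamma> x) UNIV"
proof -
  have "\<forall>\<gamma>. \<exists>d S. ((\<lambda>\<alpha>. \<bar>d \<alpha>\<bar> * multi_power R \<alpha>) has_sum S) UNIV \<and> S \<le> M \<gamma> \<and>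
      (\<forall>x\<in>polydisc c R. ((\<lambda>\<alpha>. d \<alpha> * multi_power (x - c) \<alpha>) has_sum g \<gamma> x) UNIV)"
    using assms unfolding majorized_def by blast
  then obtain D where "\<forall>\<gamma>. \<exists>S. ((\<lambda>\<alpha>. \<bar>D \<gamma> \<alpha>\<bar> * multi_power R \<alpha>) has_sum S) UNIV \<and> S \<le> M \<gamma> \<and>
      (\<forall>x\<in>polydisc c R. ((\<lambda>\<alpha>. D \<gamma> \<alpha> * multi_power (x - c) \<alpha>) has_sum g \<gamma> x) UNIV)"
    by (rule choice[THEN exE])
  then obtain S where "\<forall>\<gamma>. ((\<lambda>\<alpha>. \<bar>D \<gamma> \<alpha>\<bar> * multi_power R \<alpha>) has_sum S \<gamma>) UNIV \<and> S \<gamma> \<le> M \<gamma> \<and>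
      (\<forall>x\<in>polydisc c R. ((\<lambda>\<alpha>. D \<gamma> \<alpha> * multi_power (x - c) \<alpha>) has_sum g \<gamma> x) UNIV)"
    by (rule choice[THEN exE])
  then show ?thesis using that by blast
qed

lemma majorized_infsum:
  fixes g :: "'g \<Rightarrow> real^'m \<Rightarrow> real"
  assumes R: "\<And>l. 0 < R$l" and g: "\<And>\<gamma>. majorized c R (g \<gamma>) (M \<gamma>)" and M: "M summable_on UNIV"
  shows "majorized c R (\<lambda>x. \<Sum>\<^sub>\<infinity>\<gamma>. g \<gamma> x) (\<Sum>\<^sub>\<infinity>\<gamma>. M \<gamma>)"
proof -
  obtain D S where D: "\<And>\<gamma>. ((\<lambda>\<alpha>. \<bar>D \<gamma> \<alpha>\<bar> * multi_power R \<alpha>) has_sum S \<gamma>) UNIV"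
    "\<And>\<gamma>. S \<gamma> \<le> M \<gamma>"
    "\<And>\<gamma> x. x \<in> polydisc c R \<Longrightarrow> ((\<lambda>\<alpha>. D \<gamma> \<alpha> * multi_power (x - c) \<alpha>) has_sum g \<gamma> x) UNIV"
    by (rule majorized_choice[of c R g M, OF g]) blast
  have pos: "0 < multi_power R \<alpha>" for \<alpha> using multi_power_pos R by blast
  have S_nonneg: "0 \<le> S \<gamma>" for \<gamma> using weighted_sum_nonneg[OF D(1)] R less_imp_le by blast
  have S: "S summable_on UNIV"
    by (rule summable_on_comparison_test[OF M D(2) S_nonneg])
  have double: "(\<lambda>(\<gamma>,\<alpha>). \<bar>D \<gamma> \<alpha>\<bar> * multi_power R \<alpha>) summable_on UNIV \<times> UNIV"
    by (rule summable_on_SigmaI[where g=S]) (use D(1) S pos in \<open>simp_all add: less_imp_le\<close>)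
  note swapped = has_sum_swap_inner[OF double D(1)]
  have D_abs_summable: "(\<lambda>\<gamma>. \<bar>D \<gamma> \<alpha>\<bar>) summable_on UNIV" for \<alpha>
  proof -
    have "(\<lambda>\<gamma>. \<bar>D \<gamma> \<alpha>\<bar> * multi_power R \<alpha> * inverse (multi_power R \<alpha>)) summable_on UNIV"
      using summable_on_cmult_left[OF swapped(1)[of \<alpha>]] by simp
    then show ?thesis using pos[of \<alpha>] by (simp add: mult.assoc)
  qed
  define E where "E = (\<lambda>\<alpha>. \<Sum>\<^sub>\<infinity>\<gamma>. D \<gamma> \<alpha>)"
  obtain U where U: "((\<lambda>\<alpha>. \<bar>E \<alpha>\<bar> * multi_power R \<alpha>) has_sum U) UNIV" "U \<le> (\<Sum>\<^sub>\<infinity>\<gamma>. S \<gamma>)"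
  proof (rule has_sum_comparison[OF swapped(2)])
    fix \<alpha>
    have "\<bar>E \<alpha>\<bar> \<le> (\<Sum>\<^sub>\<infinity>\<gamma>. \<bar>D \<gamma> \<alpha>\<bar>)"
      unfolding E_def using norm_infsum_bound[of "\<lambda>\<gamma>. D \<gamma> \<alpha>" UNIV] D_abs_summable by simp
    then show "\<bar>E \<alpha>\<bar> * multi_power R \<alpha> \<le> (\<Sum>\<^sub>\<infinity>\<gamma>. \<bar>D \<gamma> \<alpha>\<bar> * multi_power R \<alpha>)"
      using pos[of \<alpha>] by (simp add: infsum_cmult_left' mult_right_mono)
  qed (use pos in \<open>simp add: less_imp_le\<close>)
  show ?thesis
  proof (rule majorizedI[OF R U(1)])
    show "U \<le> (\<Sum>\<^sub>\<infinity>\<gamma>. M \<gamma>)"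
      using U(2) infsum_mono[OF S M D(2)] by linarith
    fix x assume x: "x \<in> polydisc c R"
    then have x': "\<bar>x$l - c$l\<bar> \<le> R$l" for l unfolding polydisc_def by (simp add: less_imp_le)
    have "(\<lambda>p. norm ((\<lambda>(\<gamma>,\<alpha>). D \<gamma> \<alpha> * multi_power (x - c) \<alpha>) p)) summable_on UNIV \<times> UNIV"
    proof (rule summable_on_comparison_test[OF double])
      show "norm ((\<lambda>(\<gamma>,\<alpha>). D \<gamma> \<alpha> * multi_power (x - c) \<alpha>) p) \<le> (\<lambda>(\<gamma>,\<alpha>). \<bar>D \<gamma> \<alpha>\<bar> * multi_power R \<alpha>) p" for p
        using abs_power_series_term_le[OF x', of "D (fst p)" "snd p"] by (simp add: case_prod_unfold)
    qed simp
    then have "(\<lambda>(\<gamma>,\<alpha>). D \<gamma> \<alpha> * multi_power (x - c) \<alpha>) summable_on UNIV \<times> UNIV"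
      by (rule abs_summable_summable)
    from has_sum_swap_inner(2)[OF this D(3)[OF x]]
    show "((\<lambda>\<alpha>. E \<alpha> * multi_power (x - c) \<alpha>) has_sum (\<Sum>\<^sub>\<infinity>\<gamma>. g \<gamma> x)) UNIV"
      unfolding E_def by (simp add: infsum_cmult_left')
  qed
qed

lemma majorized_univariate:
  fixes a :: "nat \<Rightarrow> real"
  assumes R: "\<And>l. 0 < R$l" and a: "summable (\<lambda>k. \<bar>a k\<bar> * (R$l)^k)"
    and f: "\<And>x. x \<in> polydisc c R \<Longrightarrow> (\<lambda>k. a k * (x$l - c$l)^k) sums f x"
  shows "majorized c R f (\<Sum>k. \<bar>a k\<bar> * (R$l)^k)"
proof -
  let ?e = "\<lambda>k. (\<lambda>_. 0)(l := k)"
  define d where "d = (\<lambda>\<alpha>. if \<alpha> \<in> range ?e then a (\<alpha> l) else 0)"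
  have d: "d (?e k) = a k" for k unfolding d_def by auto
  show ?thesis
  proof (rule majorizedI[OF R])
    have "((\<lambda>k. \<bar>a k\<bar> * (R$l)^k) has_sum (\<Sum>k. \<bar>a k\<bar> * (R$l)^k)) UNIV"
      by (rule sums_nonneg_imp_has_sum[OF summable_sums[OF a]]) (simp add: R less_imp_le)
    then show "((\<lambda>\<alpha>. \<bar>d \<alpha>\<bar> * multi_power R \<alpha>) has_sum (\<Sum>k. \<bar>a k\<bar> * (R$l)^k)) UNIV"
      by (subst has_sum_reindex_single_index[where l=l]) (auto simp: d_def d multi_power_single_index)
    fix x assume x: "x \<in> polydisc c R"
    have "summable (\<lambda>k. norm (a k * (x$l - c$l)^k))"
    proof (rule summable_comparison_test'[OF a])
      show "norm (norm (a k * (x$l - c$l)^k)) \<le> \<bar>a k\<bar> * (R$l)^k" for k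
        using x unfolding polydisc_def
        by (simp add: abs_mult power_abs mult_left_mono power_mono less_imp_le)
    qed
    then have "((\<lambda>k. a k * (x$l - c$l)^k) has_sum f x) UNIV"
      by (rule norm_summable_imp_has_sum[OF _ f[OF x]])
    then show "((\<lambda>\<alpha>. d \<alpha> * multi_power (x - c) \<alpha>) has_sum f x) UNIV"
      by (subst has_sum_reindex_single_index[where l=l]) (auto simp: d_def d multi_power_single_index)
  qed simp
qed

definition binomial_majorant :: "real \<Rightarrow> real \<Rightarrow> real" where
  "binomial_majorant a r = (\<Sum>n. \<bar>a gchoose n\<bar> * r ^ n)"

lemma summable_binomial_majorant:
  fixes a r :: real
  assumes "\<bar>r\<bar> < 1"
  shows "summable (\<lambda>n. \<bar>a gchoose n\<bar> * r ^ n)"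
proof -
  have "1 \<le> conv_radius (\<lambda>n. a gchoose n)"
    by (simp add: conv_radius_gchoose)
  then have "1 \<le> conv_radius (\<lambda>n. norm (a gchoose n))"
    by (simp only: conv_radius_norm)
  moreover have "ereal (norm r) < 1" using assms by simp
  ultimately have "ereal (norm r) < conv_radius (\<lambda>n. norm (a gchoose n))"
    by (rule order.strict_trans2[rotated])
  from summable_in_conv_radius[OF this] show ?thesis by simp
qed

lemma binomial_majorant_tendsto_1: "(binomial_majorant a \<longlongrightarrow> 1) (at 0)"
proof -
  have "isCont (\<lambda>r. \<Sum>n. \<bar>a gchoose n\<bar> * r ^ n) 0"
    by (rule isCont_powser[OF summable_binomial_majorant[where r="1/2"]]) simp_all
  then show ?thesis
    unfolding binomial_majorant_def isCont_def using powser_zero[of "\<lambda>n. \<bar>a gchoose n\<bar>"] by simp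
qed

lemma majorized_binomial:
  assumes r: "0 < r" "r < 1" and c: "\<And>l. 0 < c$l"
  shows "majorized c (r *\<^sub>R c) (\<lambda>x. (x$l / c$l) powr a) (binomial_majorant a r)"
proof -
  define g where "g = (\<lambda>k. (a gchoose k) / (c$l) ^ k)"
  have g: "\<bar>g k\<bar> * ((r *\<^sub>R c)$l) ^ k = \<bar>a gchoose k\<bar> * r ^ k" for k
    unfolding g_def using c[of l] by (simp add: abs_mult power_mult_distrib field_simps)
  have "majorized c (r *\<^sub>R c) (\<lambda>x. (x$l / c$l) powr a) (\<Sum>k. \<bar>g k\<bar> * ((r *\<^sub>R c)$l) ^ k)"
  proof (rule majorized_univariate)
    show "summable (\<lambda>k. \<bar>g k\<bar> * ((r *\<^sub>R c)$l) ^ k)"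
      unfolding g using summable_binomial_majorant[of r a] r by simp
    fix x assume "x \<in> polydisc c (r *\<^sub>R c)"
    then have "\<bar>x$l - c$l\<bar> < r * c$l" unfolding polydisc_def by simp
    define w where "w = (x$l - c$l) / c$l"
    have "\<bar>w\<bar> < 1"
      unfolding w_def using \<open>\<bar>x$l - c$l\<bar> < r * c$l\<close> c[of l] r
      by (simp add: abs_div pos_divide_less_eq) (smt (verit) mult_le_cancel_right2)
    then have "(\<lambda>n. (a gchoose n) * w ^ n) sums (1 + w) powr a" by (rule gen_binomial_real)
    moreover have "1 + w = x$l / c$l" unfolding w_def using c[of l] by (simp add: field_simps)
    moreover have "(a gchoose n) * w ^ n = g n * (x$l - c$l) ^ n" for n
      unfolding g_def w_def by (simp add: power_divide)
    ultimately show "(\<lambda>k. g k * (x$l - c$l) ^ k) sums (x$l / c$l) powr a" by simp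
  qed (use r c in simp)
  then show ?thesis unfolding g binomial_majorant_def .
qed

section \<open>Termwise differentiation and the Cauchy estimate\<close>

definition power_series :: "real^'m \<Rightarrow> (('m \<Rightarrow> nat) \<Rightarrow> real) \<Rightarrow> real^'m \<Rightarrow> real" where
  "power_series c d x = (\<Sum>\<^sub>\<infinity>\<alpha>. d \<alpha> * multi_power (x - c) \<alpha>)"

text \<open>Unlike a bound at the polyradius R itself, absolute convergence on all smaller
polydiscs survives termwise differentiation.\<close>
definition summable_below :: "real^'m \<Rightarrow> (('m \<Rightarrow> nat) \<Rightarrow> real) \<Rightarrow> bool" where
  "summable_below R d \<longleftrightarrow>
     (\<forall>R'. (\<forall>l. 0 \<le> R'$l \<and> R'$l < R$l) \<longrightarrow> (\<lambda>\<alpha>. \<bar>d \<alpha>\<bar> * multi_power R' \<alpha>) summable_on UNIV)"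

definition coeff_partial :: "'m \<Rightarrow> (('m \<Rightarrow> nat) \<Rightarrow> real) \<Rightarrow> ('m \<Rightarrow> nat) \<Rightarrow> real" where
  "coeff_partial i d \<beta> = real (Suc (\<beta> i)) * d (\<beta>(i := Suc (\<beta> i)))"

fun coeff_iter_partial :: "'m list \<Rightarrow> (('m \<Rightarrow> nat) \<Rightarrow> real) \<Rightarrow> ('m \<Rightarrow> nat) \<Rightarrow> real" where
  "coeff_iter_partial [] d = d"
| "coeff_iter_partial (i # L) d = coeff_partial i (coeff_iter_partial L d)"

lemma summable_belowI:
  assumes "((\<lambda>\<alpha>. \<bar>d \<alpha>\<bar> * multi_power R \<alpha>) has_sum S) UNIV"
  shows "summable_below R d"
  unfolding summable_below_def
proof (intro allI impI)
  fix R' :: "real^'a" assume R': "\<forall>l. 0 \<le> R'$l \<and> R'$l < R$l"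
  show "(\<lambda>\<alpha>. \<bar>d \<alpha>\<bar> * multi_power R' \<alpha>) summable_on UNIV"
  proof (rule summable_on_comparison_test[OF has_sum_imp_summable[OF assms]])
    show "\<bar>d \<alpha>\<bar> * multi_power R' \<alpha> \<le> \<bar>d \<alpha>\<bar> * multi_power R \<alpha>" for \<alpha>
      using abs_multi_power_le[of R' R \<alpha>] multi_power_nonneg[of R' \<alpha>] R'
      by (intro mult_left_mono) (auto simp: less_imp_le)
  qed (use multi_power_nonneg[of R'] R' in \<open>auto intro!: mult_nonneg_nonneg\<close>)
qed

lemma has_sum_power_series:
  assumes "summable_below R d" "x \<in> polydisc c R"
  shows "((\<lambda>\<alpha>. d \<alpha> * multi_power (x - c) \<alpha>) has_sum power_series c d x) UNIV"
proof -
  define R' where "R' = (\<chi> l. (\<bar>x$l - c$l\<bar> + R$l) / 2)"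
  have x: "\<bar>x$l - c$l\<bar> < R$l" for l
    using assms(2) unfolding polydisc_def by blast
  have R': "0 \<le> R'$l" "R'$l < R$l" "\<bar>x$l - c$l\<bar> \<le> R'$l" for l
    using x[of l] unfolding R'_def by simp_all
  then have "(\<lambda>\<alpha>. \<bar>d \<alpha>\<bar> * multi_power R' \<alpha>) summable_on UNIV"
    using assms(1) unfolding summable_below_def by blast
  then have "(\<lambda>\<alpha>. norm (d \<alpha> * multi_power (x - c) \<alpha>)) summable_on UNIV"
    using abs_summable_power_series[OF has_sum_infsum R'(3)] by simp
  then have "(\<lambda>\<alpha>. d \<alpha> * multi_power (x - c) \<alpha>) summable_on UNIV"
    by (rule abs_summable_summable)
  then show ?thesis unfolding power_series_def by (rule has_sum_infsum)
qed

lemma power_series_centre: "power_series c d c = d (\<lambda>_. 0)"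
proof -
  have "((\<lambda>\<alpha>. d \<alpha> * multi_power (c - c) \<alpha>) has_sum d (\<lambda>_. 0)) UNIV"
    using has_sum_zero_index[of "\<lambda>\<alpha>. d \<alpha> * multi_power (c - c) \<alpha>"] by (simp add: multi_power_zero)
  then show ?thesis unfolding power_series_def by (rule infsumI)
qed

lemma Suc_mult_power_le:
  fixes a b :: real
  assumes "0 \<le> a" "a < b"
  shows "real (Suc k) * a ^ k \<le> b ^ Suc k / (b - a)"
proof -
  define q where "q = a / b"
  have q: "0 \<le> q" "q < 1" and b: "0 < b" using assms by (auto simp: q_def)
  have "real (Suc k) * q ^ k = (\<Sum>j<Suc k. q ^ k)" by simp
  also have "\<dots> \<le> (\<Sum>j<Suc k. q ^ j)"
    by (intro sum_mono power_decreasing) (use q in auto)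
  also have "\<dots> = (1 - q ^ Suc k) / (1 - q)" by (subst sum_gp_strict) (use q in auto)
  also have "\<dots> \<le> 1 / (1 - q)" using q by (intro divide_right_mono) auto
  finally have "real (Suc k) * q ^ k * b ^ k \<le> 1 / (1 - q) * b ^ k"
    using b by (intro mult_right_mono) auto
  moreover have "q ^ k * b ^ k = a ^ k" "1 / (1 - q) * b ^ k = b ^ Suc k / (b - a)"
    using b q(2) by (simp_all add: q_def power_divide field_simps)
  ultimately show ?thesis by (simp add: mult.assoc)
qed

lemma summable_below_coeff_partial:
  assumes "summable_below R d"
  shows "summable_below R (coeff_partial i d)"
  unfolding summable_below_def
proof (intro allI impI)
  fix R' :: "real^'a" assume R': "\<forall>l. 0 \<le> R'$l \<and> R'$l < R$l"
  define R2 where "R2 = (\<chi> l. (R'$l + R$l) / 2)"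
  have R2: "R'$l < R2$l" "R2$l < R$l" "0 < R2$l" for l
    using R'[rule_format, of l] unfolding R2_def by auto
  let ?s = "\<lambda>\<beta>. \<beta>(i := Suc (\<beta> i))"
  let ?g = "\<lambda>\<alpha>. \<bar>d \<alpha>\<bar> * multi_power R2 \<alpha>"
  have "?g summable_on UNIV"
    using assms R2 unfolding summable_below_def by (meson less_imp_le)
  then have "?g summable_on range ?s" by (rule summable_on_subset) simp
  then have "(\<lambda>\<beta>. ?g (?s \<beta>)) summable_on UNIV"
    using summable_on_reindex[OF inj_Suc_index, of ?g i] by (simp add: o_def)
  then have shifted: "(\<lambda>\<beta>. C * ?g (?s \<beta>)) summable_on UNIV" for C
    by (rule summable_on_cmult_right)
  define C where "C = 1 / (R2$i - R'$i)"
  have C: "0 < C" unfolding C_def using R2[of i] by simp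
  have le: "\<bar>coeff_partial i d \<beta>\<bar> * multi_power R' \<beta> \<le> C * ?g (?s \<beta>)" for \<beta>
  proof -
    define P where "P = (\<Prod>l\<in>-{i}. (R'$l) ^ \<beta> l)"
    define P2 where "P2 = (\<Prod>l\<in>-{i}. (R2$l) ^ \<beta> l)"
    have P: "0 \<le> P" "P \<le> P2"
      unfolding P_def P2_def using R' R2(1)
      by (auto intro!: prod_nonneg prod_mono power_mono simp: less_imp_le)
    have k: "real (Suc (\<beta> i)) * (R'$i) ^ \<beta> i \<le> C * (R2$i) ^ Suc (\<beta> i)"
      using Suc_mult_power_le[of "R'$i" "R2$i" "\<beta> i"] R' R2[of i] by (simp add: C_def)
    have "\<bar>coeff_partial i d \<beta>\<bar> * multi_power R' \<beta>
        = \<bar>d (?s \<beta>)\<bar> * ((real (Suc (\<beta> i)) * (R'$i) ^ \<beta> i) * P)"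
      unfolding P_def multi_power_split[of R' _ i] coeff_partial_def by (simp add: abs_mult mult_ac)
    also have "\<dots> \<le> \<bar>d (?s \<beta>)\<bar> * ((C * (R2$i) ^ Suc (\<beta> i)) * P2)"
      by (intro mult_left_mono mult_mono k P) (use C R2[of i] in auto)
    also have "\<dots> = C * ?g (?s \<beta>)"
      unfolding P2_def multi_power_split[of R2 _ i] by (auto intro!: prod.cong)
    finally show ?thesis .
  qed
  show "(\<lambda>\<beta>. \<bar>coeff_partial i d \<beta>\<bar> * multi_power R' \<beta>) summable_on UNIV"
    by (rule summable_on_comparison_test[OF shifted le])
       (use multi_power_nonneg[of R'] R' in \<open>auto intro!: mult_nonneg_nonneg\<close>)
qed

lemma power_diff_quotient_bound:
  fixes u h K R :: real
  assumes "h \<noteq> 0" "\<bar>u\<bar> \<le> K" "\<bar>u + h\<bar> \<le> K" "0 < K" "K < R"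
  shows "\<bar>((u + h) ^ Suc k - u ^ Suc k) / h - real (Suc k) * u ^ k\<bar>
    \<le> \<bar>h\<bar> * (R / (K * (R - K))) * (real (Suc k) * R ^ k)"
proof -
  have "K * (real k * K ^ (k - 1)) \<le> real (Suc k) * K ^ k"
    using assms by (cases k) (auto intro!: mult_right_mono)
  also have "\<dots> \<le> R ^ Suc k / (R - K)"
    by (rule Suc_mult_power_le) (use assms in auto)
  finally have k: "real k * K ^ (k - 1) \<le> R ^ Suc k / (K * (R - K))"
    using assms(4,5) by (simp add: pos_le_divide_eq mult_ac)
  have "\<bar>((u + h) ^ Suc k - u ^ Suc k) / h - real (Suc k) * u ^ k\<bar>
      \<le> real (Suc k) * (real k * K ^ (k - 1)) * \<bar>h\<bar>"
    using lemma_termdiff3[of h u K "Suc k"] assms by (simp add: numeral_2_eq_2 mult.assoc)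
  also have "\<dots> \<le> real (Suc k) * (R ^ Suc k / (K * (R - K))) * \<bar>h\<bar>"
    by (intro mult_right_mono mult_left_mono k) auto
  also have "\<dots> = \<bar>h\<bar> * (R / (K * (R - K))) * (real (Suc k) * R ^ k)"
    by (simp add: mult_ac)
  finally show ?thesis .
qed

lemma has_sum_power_series_diff_quotient:
  fixes x c :: "real^'m" and i :: 'm
  defines "u \<equiv> x$i - c$i" and "P \<equiv> \<lambda>\<beta>. \<Prod>l\<in>-{i}. (x$l - c$l) ^ \<beta> l"
  assumes d: "summable_below R d" and x: "x \<in> polydisc c R" and y: "x + h *\<^sub>R axis i 1 \<in> polydisc c R"
  shows "((\<lambda>\<beta>. d (\<beta>(i := Suc (\<beta> i))) * P \<beta> *
             (((u + h) ^ Suc (\<beta> i) - u ^ Suc (\<beta> i)) / h - real (Suc (\<beta> i)) * u ^ \<beta> i))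
          has_sum (power_series c d (x + h *\<^sub>R axis i 1) - power_series c d x) * inverse h
            - power_series c (coeff_partial i d) x) UNIV"
proof -
  have mp_y: "multi_power (x + h' *\<^sub>R axis i 1 - c) \<beta> = (u + h') ^ \<beta> i * P \<beta>" for \<beta> h'
    unfolding multi_power_split[of _ \<beta> i] P_def u_def
    by (intro arg_cong2[where f="(*)"] prod.cong) (auto simp: axis_def algebra_simps)
  have mp_x: "multi_power (x - c) \<beta> = u ^ \<beta> i * P \<beta>" for \<beta>
    using mp_y[where h'=0] by simp
  have P_Suc: "P (\<beta>(i := Suc (\<beta> i))) = P \<beta>" for \<beta> unfolding P_def by (intro prod.cong) auto
  have "((\<lambda>\<alpha>. (d \<alpha> * multi_power (x + h *\<^sub>R axis i 1 - c) \<alpha> - d \<alpha> * multi_power (x - c) \<alpha>) * inverse h)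
      has_sum (power_series c d (x + h *\<^sub>R axis i 1) - power_series c d x) * inverse h) UNIV"
    by (intro has_sum_cmult_left has_sum_diff has_sum_power_series[OF d] x y)
  then have "((\<lambda>\<beta>. d (\<beta>(i := Suc (\<beta> i))) * P \<beta> * ((u + h) ^ Suc (\<beta> i) - u ^ Suc (\<beta> i)) * inverse h)
      has_sum (power_series c d (x + h *\<^sub>R axis i 1) - power_series c d x) * inverse h) UNIV"
    by (subst (asm) has_sum_reindex_Suc_index[of i]) (simp_all add: mp_x mp_y P_Suc algebra_simps)
  from has_sum_diff[OF this has_sum_power_series[OF summable_below_coeff_partial[OF d] x]]
  show ?thesis by (simp add: coeff_partial_def mp_x divide_inverse algebra_simps)
qed

lemma power_series_diff_quotient_bound:
  assumes d: "summable_below R d" and x: "x \<in> polydisc c R"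
  obtains \<delta> B where "0 < \<delta>"
    "\<And>h. h \<noteq> 0 \<Longrightarrow> \<bar>h\<bar> < \<delta> \<Longrightarrow>
       \<bar>(power_series c d (x + h *\<^sub>R axis i 1) - power_series c d x) * inverse h
         - power_series c (coeff_partial i d) x\<bar> \<le> \<bar>h\<bar> * B"
proof -
  have x': "\<bar>x$l - c$l\<bar> < R$l" for l using x unfolding polydisc_def by blast
  define u where "u = x$i - c$i"
  define P where "P = (\<lambda>\<beta>. \<Prod>l\<in>-{i}. (x$l - c$l) ^ \<beta> l)"
  define K where "K = (\<bar>u\<bar> + R$i) / 2"
  define R2 where "R2 = (K + R$i) / 2"
  have K: "\<bar>u\<bar> < K" "K < R2" "R2 < R$i" "0 < K"
    using x'[of i] unfolding K_def R2_def u_def by auto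
  \<comment> \<open>increments with |u + h| \<le> K are admissible; the gap between K and R2 absorbs the
    factor \<beta>_i + 1 coming from the derivative\<close>
  define Rt where "Rt = (\<chi> l. if l = i then R2 else \<bar>x$l - c$l\<bar>)"
  have "\<forall>l. 0 \<le> Rt$l \<and> Rt$l < R$l"
    using x' K unfolding Rt_def by auto
  then have "(\<lambda>\<beta>. \<bar>coeff_partial i d \<beta>\<bar> * multi_power Rt \<beta>) summable_on UNIV"
    using summable_below_coeff_partial[OF d, of i] unfolding summable_below_def by blast
  then have Rt_sum: "((\<lambda>\<beta>. \<bar>coeff_partial i d \<beta>\<bar> * multi_power Rt \<beta>) has_sum
      (\<Sum>\<^sub>\<infinity>\<beta>. \<bar>coeff_partial i d \<beta>\<bar> * multi_power Rt \<beta>)) UNIV"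
    by simp
  have mp_Rt: "multi_power Rt \<beta> = R2 ^ \<beta> i * \<bar>P \<beta>\<bar>" for \<beta>
    unfolding multi_power_split[of Rt \<beta> i] P_def abs_prod power_abs
    by (intro arg_cong2[where f="(*)"] prod.cong) (auto simp: Rt_def)
  define C where "C = R2 / (K * (R2 - K))"
  show ?thesis
  proof (rule that[of "K - \<bar>u\<bar>" "C * (\<Sum>\<^sub>\<infinity>\<beta>. \<bar>coeff_partial i d \<beta>\<bar> * multi_power Rt \<beta>)"])
    show "0 < K - \<bar>u\<bar>" using K by simp
    fix h :: real assume h: "h \<noteq> 0" "\<bar>h\<bar> < K - \<bar>u\<bar>"
    have uh: "\<bar>u + h\<bar> \<le> K" using h by linarith
    have "x + h *\<^sub>R axis i 1 \<in> polydisc c R"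
      unfolding polydisc_def
      using x' uh K by (auto simp: axis_def u_def algebra_simps split: if_splits)
    from has_sum_power_series_diff_quotient[OF d x this]
    have "((\<lambda>\<beta>. d (\<beta>(i := Suc (\<beta> i))) * P \<beta> *
             (((u + h) ^ Suc (\<beta> i) - u ^ Suc (\<beta> i)) / h - real (Suc (\<beta> i)) * u ^ \<beta> i))
          has_sum (power_series c d (x + h *\<^sub>R axis i 1) - power_series c d x) * inverse h
            - power_series c (coeff_partial i d) x) UNIV"
      unfolding u_def P_def .
    moreover have "((\<lambda>\<beta>. \<bar>h\<bar> * C * (\<bar>coeff_partial i d \<beta>\<bar> * multi_power Rt \<beta>)) has_sum
        \<bar>h\<bar> * (C * (\<Sum>\<^sub>\<infinity>\<beta>. \<bar>coeff_partial i d \<beta>\<bar> * multi_power Rt \<beta>))) UNIV"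
      using has_sum_cmult_right[OF Rt_sum, of "\<bar>h\<bar> * C"] by (simp add: mult.assoc)
    moreover have "\<bar>d (\<beta>(i := Suc (\<beta> i))) * P \<beta> *
          (((u + h) ^ Suc (\<beta> i) - u ^ Suc (\<beta> i)) / h - real (Suc (\<beta> i)) * u ^ \<beta> i)\<bar>
        \<le> \<bar>h\<bar> * C * (\<bar>coeff_partial i d \<beta>\<bar> * multi_power Rt \<beta>)" for \<beta>
      using mult_left_mono[OF power_diff_quotient_bound[of h u K R2 "\<beta> i"], of "\<bar>d (\<beta>(i := Suc (\<beta> i))) * P \<beta>\<bar>"]
        h(1) K uh
      by (simp add: C_def coeff_partial_def mp_Rt abs_mult mult_ac)
    ultimately show "\<bar>(power_series c d (x + h *\<^sub>R axis i 1) - power_series c d x) * inverse h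
        - power_series c (coeff_partial i d) x\<bar>
      \<le> \<bar>h\<bar> * (C * (\<Sum>\<^sub>\<infinity>\<beta>. \<bar>coeff_partial i d \<beta>\<bar> * multi_power Rt \<beta>))"
      by (rule has_sum_abs_le)
  qed
qed

lemma has_real_derivative_power_series_partial:
  assumes "summable_below R d" "x \<in> polydisc c R"
  shows "((\<lambda>s. power_series c d (x + s *\<^sub>R axis i 1)) has_real_derivative
           power_series c (coeff_partial i d) x) (at 0)"
proof -
  obtain \<delta> B where \<delta>: "0 < \<delta>"
    "\<And>h. h \<noteq> 0 \<Longrightarrow> \<bar>h\<bar> < \<delta> \<Longrightarrow>
       \<bar>(power_series c d (x + h *\<^sub>R axis i 1) - power_series c d x) * inverse h
         - power_series c (coeff_partial i d) x\<bar> \<le> \<bar>h\<bar> * B"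
    using power_series_diff_quotient_bound[OF assms] by blast
  have "((\<lambda>h. (power_series c d (x + h *\<^sub>R axis i 1) - power_series c d (x + 0 *\<^sub>R axis i 1)) / (h - 0)
      - power_series c (coeff_partial i d) x) \<longlongrightarrow> 0) (at 0)"
  proof (rule Lim_null_comparison)
    show "\<forall>\<^sub>F h in at 0. norm ((power_series c d (x + h *\<^sub>R axis i 1) - power_series c d (x + 0 *\<^sub>R axis i 1))
        / (h - 0) - power_series c (coeff_partial i d) x) \<le> \<bar>h\<bar> * B"
      unfolding eventually_at by (rule exI[of _ \<delta>]) (use \<delta> in \<open>auto simp: divide_inverse\<close>)
    show "((\<lambda>h. \<bar>h\<bar> * B) \<longlongrightarrow> 0) (at 0)"
      using tendsto_mult_left_zero[OF tendsto_rabs_zero[OF tendsto_ident_at]] by simp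
  qed
  then show ?thesis
    unfolding has_field_derivative_iff by (rule LIM_zero_cancel)
qed

lemma eventually_nhds_axis_line:
  fixes x :: "real^'m"
  assumes "open V" "x \<in> V"
  shows "\<forall>\<^sub>F s in nhds 0. x + s *\<^sub>R axis i 1 \<in> V"
proof -
  have "((\<lambda>s. x + s *\<^sub>R axis i 1) \<longlongrightarrow> x + 0 *\<^sub>R axis i 1) (nhds 0)"
    by (intro tendsto_intros filterlim_ident)
  then show ?thesis using topological_tendstoD[OF _ assms(1)] assms(2) by simp
qed

lemma iter_partial_cong_open:
  assumes "open V" "x \<in> V" "\<And>y. y \<in> V \<Longrightarrow> g y = h y"
  shows "iter_partial L g x = iter_partial L h x"
  using assms(2)
proof (induction L arbitrary: x)
  case Nil
  then show ?case using assms(3) by simp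
next
  case (Cons i L)
  have "\<forall>\<^sub>F s in nhds 0. iter_partial L g (x + s *\<^sub>R axis i 1) = iter_partial L h (x + s *\<^sub>R axis i 1)"
    using eventually_nhds_axis_line[OF assms(1) Cons.prems, of i] by eventually_elim (rule Cons.IH)
  then show ?case unfolding iter_partial.simps partial_deriv_def
    by (rule deriv_cong_ev) simp
qed

lemma summable_below_coeff_iter_partial: "summable_below R d \<Longrightarrow> summable_below R (coeff_iter_partial L d)"
  by (induction L) (auto intro: summable_below_coeff_partial)

lemma iter_partial_power_series:
  assumes "summable_below R d" "x \<in> polydisc c R"
  shows "iter_partial L (power_series c d) x = power_series c (coeff_iter_partial L d) x"
  using assms(2)
proof (induction L arbitrary: x)
  case Nil
  then show ?case by simp
next
  case (Cons i L)
  have "\<forall>\<^sub>F s in nhds 0. iter_partial L (power_series c d) (x + s *\<^sub>R axis i 1)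
      = power_series c (coeff_iter_partial L d) (x + s *\<^sub>R axis i 1)"
    using eventually_nhds_axis_line[OF open_polydisc Cons.prems, of i]
    by eventually_elim (rule Cons.IH)
  then have "iter_partial (i # L) (power_series c d) x
      = deriv (\<lambda>s. power_series c (coeff_iter_partial L d) (x + s *\<^sub>R axis i 1)) 0"
    unfolding iter_partial.simps partial_deriv_def by (rule deriv_cong_ev) simp
  also have "\<dots> = power_series c (coeff_iter_partial (i # L) d) x"
    using has_real_derivative_power_series_partial[OF summable_below_coeff_iter_partial[OF assms(1)] Cons.prems]
    by (simp add: DERIV_imp_deriv)
  finally show ?case .
qed

lemma coeff_iter_partial_eq:
  fixes L :: "'m::finite list"
  shows "coeff_iter_partial L d \<beta>
    = (\<Prod>l\<in>UNIV. fact (\<beta> l + count_list L l) / fact (\<beta> l)) * d (\<lambda>l. \<beta> l + count_list L l)"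
proof (induction L arbitrary: \<beta>)
  case Nil
  then show ?case by simp
next
  case (Cons i L)
  let ?c = "count_list L" and ?\<beta>' = "\<beta>(i := Suc (\<beta> i))"
  have count: "count_list (i # L) l = (if l = i then Suc (?c l) else ?c l)" for l by simp
  have arg: "(\<lambda>l. ?\<beta>' l + ?c l) = (\<lambda>l. \<beta> l + count_list (i # L) l)"
    by (rule ext) (simp add: count)
  have split: "(\<Prod>l\<in>UNIV. f l :: real) = f i * (\<Prod>l\<in>-{i}. f l)" for f
    using prod.remove[of UNIV i f] by (simp add: Compl_eq_Diff_UNIV)
  have "(\<Prod>l\<in>UNIV. fact (?\<beta>' l + ?c l) / fact (?\<beta>' l) :: real)
      = fact (Suc (\<beta> i) + ?c i) / fact (Suc (\<beta> i)) * (\<Prod>l\<in>-{i}. fact (\<beta> l + ?c l) / fact (\<beta> l))"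
    by (subst split) (auto intro!: prod.cong)
  moreover have "(\<Prod>l\<in>UNIV. fact (\<beta> l + count_list (i # L) l) / fact (\<beta> l) :: real)
      = fact (\<beta> i + Suc (?c i)) / fact (\<beta> i) * (\<Prod>l\<in>-{i}. fact (\<beta> l + ?c l) / fact (\<beta> l))"
    by (subst split) (auto intro!: prod.cong simp: count)
  moreover have "real (Suc (\<beta> i)) * (fact (Suc (\<beta> i) + ?c i) / fact (Suc (\<beta> i)))
      = (fact (\<beta> i + Suc (?c i)) / fact (\<beta> i) :: real)"
    by (simp del: of_nat_Suc add: fact_Suc[of "\<beta> i"])
  ultimately show ?case
    unfolding coeff_iter_partial.simps coeff_partial_def Cons.IH arg by (simp add: mult_ac)
qed

lemma fact_mult_fact_le: "fact a * fact b \<le> (fact (a + b) :: nat)"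
proof -
  have "fact a * fact b * ((a + b) choose a) = fact (a + b)"
    using binomial_fact_lemma[of a "a + b"] by simp
  moreover have "1 \<le> (a + b) choose a" by (simp add: Suc_leI)
  ultimately show ?thesis by (metis mult_le_mono2 nat_mult_1_right)
qed

lemma prod_fact_le_fact_sum:
  assumes "finite S"
  shows "(\<Prod>s\<in>S. fact (f s)) \<le> (fact (\<Sum>s\<in>S. f s) :: nat)"
  using assms
proof (induction S rule: finite_induct)
  case (insert x S)
  have "(\<Prod>s\<in>insert x S. fact (f s)) = (fact (f x) * (\<Prod>s\<in>S. fact (f s)) :: nat)" using insert by simp
  also have "\<dots> \<le> fact (f x) * fact (\<Sum>s\<in>S. f s)" by (rule mult_le_mono2[OF insert.IH])
  also have "\<dots> \<le> fact (f x + (\<Sum>s\<in>S. f s))" by (rule fact_mult_fact_le)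
  finally show ?case using insert by simp
qed simp

lemma prod_fact_count_list_le:
  fixes L :: "'m::finite list"
  shows "(\<Prod>l\<in>UNIV. fact (count_list L l) :: real) \<le> fact (length L)"
proof -
  have "(\<Prod>l\<in>UNIV. fact (count_list L l)) \<le> (fact (\<Sum>l\<in>UNIV. count_list L l) :: nat)"
    by (rule prod_fact_le_fact_sum) simp
  also have "(\<Sum>l\<in>UNIV. count_list L l) = length L" by (simp add: sum_count_set)
  finally have "real (\<Prod>l\<in>UNIV. fact (count_list L l)) \<le> real (fact (length L))"
    by (rule of_nat_mono)
  then show ?thesis by (simp add: of_nat_prod)
qed

lemma majorized_iter_partial_centre:
  fixes L :: "'m::finite list"
  assumes "majorized c R h M"
  shows "\<bar>iter_partial L h c\<bar> * multi_power R (count_list L) \<le> fact (length L) * M"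
proof -
  obtain d S where d: "\<And>l. 0 < R$l" "((\<lambda>\<alpha>. \<bar>d \<alpha>\<bar> * multi_power R \<alpha>) has_sum S) UNIV" "S \<le> M"
    "\<And>x. x \<in> polydisc c R \<Longrightarrow> ((\<lambda>\<alpha>. d \<alpha> * multi_power (x - c) \<alpha>) has_sum h x) UNIV"
    by (rule majorizedE[OF assms]) blast
  have c: "c \<in> polydisc c R" by (rule centre_in_polydisc[OF d(1)])
  have "iter_partial L h c = iter_partial L (power_series c d) c"
    by (rule iter_partial_cong_open[OF open_polydisc c]) (simp add: power_series_def infsumI[OF d(4)])
  also have "\<dots> = power_series c (coeff_iter_partial L d) c"
    by (rule iter_partial_power_series[OF summable_belowI[OF d(2)] c])
  also have "\<dots> = (\<Prod>l\<in>UNIV. fact (count_list L l)) * d (count_list L)"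
    by (simp add: power_series_centre coeff_iter_partial_eq)
  finally have ip: "iter_partial L h c = (\<Prod>l\<in>UNIV. fact (count_list L l)) * d (count_list L)" .
  have "\<bar>d (count_list L)\<bar> * multi_power R (count_list L) \<le> S"
    using finite_sum_le_has_sum[OF d(2), of "{count_list L}"] d(1)
    by (simp add: less_imp_le multi_power_nonneg)
  then have "\<bar>d (count_list L)\<bar> * multi_power R (count_list L) \<le> M" using d(3) by linarith
  moreover have fact_nonneg: "0 \<le> (\<Prod>l\<in>UNIV. fact (count_list L l) :: real)" by (simp add: prod_nonneg)
  ultimately have "(\<Prod>l\<in>UNIV. fact (count_list L l)) * (\<bar>d (count_list L)\<bar> * multi_power R (count_list L))
      \<le> fact (length L) * M"
    using prod_fact_count_list_le[of L] multi_power_pos[OF d(1)]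
    by (intro mult_mono) (auto simp: less_imp_le)
  then show ?thesis unfolding ip abs_mult abs_of_nonneg[OF fact_nonneg] by (simp add: mult_ac)
qed

lemma majorized_iter_partial_bound:
  fixes L :: "'m::finite list"
  assumes "majorized x (r *\<^sub>R x) h M" "0 < r" "\<And>l. 0 < x$l"
  shows "\<bar>iter_partial L h x\<bar>
    \<le> (\<Prod>l\<in>UNIV. inverse ((x$l) ^ count_list L l)) * M * (1 / r) ^ length L * fact (length L)"
proof -
  define P where "P = (\<Prod>l\<in>UNIV. (x$l) ^ count_list L l)"
  have P: "0 < P" unfolding P_def using assms(3) by (intro prod_pos) auto
  have "\<bar>iter_partial L h x\<bar> * (r ^ length L * P) \<le> fact (length L) * M"
    using majorized_iter_partial_centre[OF assms(1), of L] unfolding multi_power_count_list P_def .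
  then have "\<bar>iter_partial L h x\<bar> \<le> fact (length L) * M / (r ^ length L * P)"
    using P assms(2) by (simp add: pos_le_divide_eq)
  also have "\<dots> = inverse P * M * (1 / r) ^ length L * fact (length L)"
    by (simp add: field_simps)
  finally show ?thesis
    unfolding P_def by (simp add: prod_inversef[symmetric])
qed

section \<open>Analytic functions of monomial ratios\<close>

lemma majorized_power_series_comp:
  fixes F :: "real^'n \<Rightarrow> real" and g :: "'n \<Rightarrow> real^'m \<Rightarrow> real"
  assumes R: "\<And>l. 0 < R$l"
    and F: "\<And>z. z \<in> ball y \<rho> \<Longrightarrow> ((\<lambda>\<gamma>. a \<gamma> * multi_power (z - y) \<gamma>) has_sum F z) UNIV"
    and g: "\<And>i. majorized c R (\<lambda>x. g i x - y$i) (s$i)" and s: "norm s < \<rho>"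
  shows "majorized c R (\<lambda>x. F (\<chi> i. g i x)) (\<Sum>\<^sub>\<infinity>\<gamma>. \<bar>a \<gamma>\<bar> * multi_power s \<gamma>)"
proof -
  have s_nonneg: "0 \<le> s$i" for i using majorized_bound_nonneg[OF g] .
  have "y + s \<in> ball y \<rho>" using s by (simp add: dist_norm)
  from has_sum_imp_summable[OF F[OF this]]
  have "(\<lambda>\<gamma>. a \<gamma> * multi_power s \<gamma>) summable_on UNIV" by simp
  then have "(\<lambda>\<gamma>. norm (a \<gamma> * multi_power s \<gamma>)) summable_on UNIV"
    by (rule summable_on_iff_abs_summable_on_real[THEN iffD1])
  moreover have "norm (a \<gamma> * multi_power s \<gamma>) = \<bar>a \<gamma>\<bar> * multi_power s \<gamma>" for \<gamma>
    using multi_power_nonneg[of s \<gamma>] s_nonneg by (simp add: abs_mult)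
  ultimately have summable: "(\<lambda>\<gamma>. \<bar>a \<gamma>\<bar> * multi_power s \<gamma>) summable_on UNIV"
    by simp
  have terms: "majorized c R (\<lambda>x. a \<gamma> * (\<Prod>i\<in>UNIV. (g i x - y$i) ^ \<gamma> i)) (\<bar>a \<gamma>\<bar> * multi_power s \<gamma>)" for \<gamma>
    unfolding multi_power_def by (intro majorized_cmult majorized_prod majorized_power g R) simp
  have "majorized c R (\<lambda>x. \<Sum>\<^sub>\<infinity>\<gamma>. a \<gamma> * (\<Prod>i\<in>UNIV. (g i x - y$i) ^ \<gamma> i))
      (\<Sum>\<^sub>\<infinity>\<gamma>. \<bar>a \<gamma>\<bar> * multi_power s \<gamma>)"
    by (rule majorized_infsum[OF R terms summable])
  then show ?thesis
  proof (rule majorized_cong)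
    fix x assume x: "x \<in> polydisc c R"
    let ?z = "(\<chi> i. g i x) :: real^'n"
    have "norm (?z - y) \<le> norm s"
      using majorized_abs_le[OF g x] s_nonneg by (intro norm_le_componentwise_cart) simp
    then have "?z \<in> ball y \<rho>" using s by (simp add: dist_norm norm_minus_commute)
    from F[OF this] show "(\<Sum>\<^sub>\<infinity>\<gamma>. a \<gamma> * (\<Prod>i\<in>UNIV. (g i x - y$i) ^ \<gamma> i)) = F ?z"
      unfolding multi_power_def by (simp add: infsumI)
  qed
qed

lemma monom_pow_ratio:
  assumes "\<And>l. 0 < x$l"
  shows "monom_pow x' \<mu> = monom_pow x \<mu> * monom_pow (\<chi> l. x'$l / x$l) \<mu>"
proof -
  have "x'$l powr \<mu>$l = x$l powr \<mu>$l * (x'$l / x$l) powr \<mu>$l" for l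
    using assms[of l] by (simp add: powr_mult[symmetric] less_imp_le)
  then show ?thesis unfolding monom_pow_def by (simp add: prod.distrib)
qed

lemma majorized_monom_pow_ratio:
  assumes "0 < r" "r < 1" "\<And>l. 0 < x$l"
  shows "majorized x (r *\<^sub>R x) (\<lambda>x'. monom_pow (\<chi> l. x'$l / x$l) \<mu>)
           (\<Prod>l\<in>UNIV. binomial_majorant (\<mu>$l) r)"
  unfolding monom_pow_def using assms
  by (auto intro!: majorized_prod majorized_binomial)

lemma majorized_analytic_comp_monom_ratio:
  fixes F :: "real^'n \<Rightarrow> real" and \<mu> :: "'n \<Rightarrow> real^'m"
  assumes F: "\<And>z. z \<in> ball y \<rho> \<Longrightarrow> ((\<lambda>\<gamma>. a \<gamma> * multi_power (z - y) \<gamma>) has_sum F z) UNIV"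
    and r: "0 < r" "r < 1" and x: "\<And>l. 0 < x$l"
    and near: "dist y \<beta> < s / 2"
    and small: "\<And>i. \<bar>\<beta>$i\<bar> * ((\<Prod>l\<in>UNIV. binomial_majorant (\<mu> i $ l) r) - 1) \<le> s / 2"
    and s: "real CARD('n) * s < \<rho>"
  shows "majorized x (r *\<^sub>R x) (\<lambda>x'. F (\<chi> i. \<beta>$i * monom_pow (\<chi> l. x'$l / x$l) (\<mu> i)))
           (\<Sum>\<^sub>\<infinity>\<gamma>. \<bar>a \<gamma>\<bar> * multi_power (\<chi> i. s) \<gamma>)"
proof -
  let ?Q = "\<lambda>i x'. monom_pow (\<chi> l. x'$l / x$l) (\<mu> i)"
  have R: "0 < (r *\<^sub>R x)$l" for l using r x by simp
  have Q_centre: "?Q i x = 1" for i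
    unfolding monom_pow_def using x by (simp add: less_imp_neq[symmetric])
  have g: "majorized x (r *\<^sub>R x) (\<lambda>x'. \<beta>$i * ?Q i x' - y$i) ((\<chi> i. s)$i)" for i
  proof -
    have "majorized x (r *\<^sub>R x) (\<lambda>x'. (\<beta>$i - y$i) + \<beta>$i * (?Q i x' - ?Q i x))
        (\<bar>\<beta>$i - y$i\<bar> + \<bar>\<beta>$i\<bar> * ((\<Prod>l\<in>UNIV. binomial_majorant (\<mu> i $ l) r) - \<bar>?Q i x\<bar>))"
      by (intro majorized_add majorized_const majorized_cmult majorized_diff_centre_value
          majorized_monom_pow_ratio R r x)
    then have "majorized x (r *\<^sub>R x) (\<lambda>x'. (\<beta>$i - y$i) + \<beta>$i * (?Q i x' - 1))
        (\<bar>\<beta>$i - y$i\<bar> + \<bar>\<beta>$i\<bar> * ((\<Prod>l\<in>UNIV. binomial_majorant (\<mu> i $ l) r) - 1))"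
      unfolding Q_centre abs_one .
    moreover have "\<bar>\<beta>$i - y$i\<bar> < s / 2"
      using component_le_norm_cart[of "\<beta> - y" i] near by (simp add: dist_norm norm_minus_commute)
    ultimately show ?thesis
      using small[of i] by (elim majorized_cong[THEN majorized_mono]) (simp_all add: algebra_simps)
  qed
  have "0 \<le> s" using majorized_bound_nonneg[OF g] by simp
  then have "norm (\<chi> i::'n. s) < \<rho>"
    using norm_le_l1_cart[of "\<chi> i::'n. s"] s by simp
  then show ?thesis
    using majorized_power_series_comp[where g="\<lambda>i x'. \<beta>$i * ?Q i x'", OF R F g] by simp
qed

lemma small_radius_binomial_majorant:
  fixes \<mu> :: "'n::finite \<Rightarrow> real^'m"
  assumes "0 < \<epsilon>"
  obtains r where "0 < r" "r < 1" "\<And>i. (\<Prod>l\<in>UNIV. binomial_majorant (\<mu> i $ l) r) \<le> 1 + \<epsilon>"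
proof -
  have "\<forall>\<^sub>F r in at 0. \<forall>i. (\<Prod>l\<in>UNIV. binomial_majorant (\<mu> i $ l) r) < 1 + \<epsilon>"
  proof (rule eventually_all_finite)
    fix i
    have "((\<lambda>r. \<Prod>l\<in>UNIV. binomial_majorant (\<mu> i $ l) r) \<longlongrightarrow> (\<Prod>l\<in>(UNIV::'m set). 1)) (at 0)"
      by (intro tendsto_prod binomial_majorant_tendsto_1)
    then show "\<forall>\<^sub>F r in at 0. (\<Prod>l\<in>UNIV. binomial_majorant (\<mu> i $ l) r) < 1 + \<epsilon>"
      using assms by (intro order_tendstoD) auto
  qed
  then obtain \<delta> where \<delta>: "0 < \<delta>"
    "\<And>r. r \<noteq> 0 \<Longrightarrow> dist r 0 < \<delta> \<Longrightarrow> \<forall>i. (\<Prod>l\<in>UNIV. binomial_majorant (\<mu> i $ l) r) < 1 + \<epsilon>"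
    unfolding eventually_at by auto
  show ?thesis
    by (rule that[of "min (\<delta> / 2) (1 / 2)"]) (use \<delta> in \<open>auto simp: less_imp_le\<close>)
qed

lemma real_analytic_on_choice:
  assumes "real_analytic_on F K"
  obtains \<rho> a where "\<And>y. y \<in> K \<Longrightarrow> 0 < \<rho> y"
    "\<And>y z. y \<in> K \<Longrightarrow> z \<in> ball y (\<rho> y) \<Longrightarrow> ((\<lambda>\<gamma>. a y \<gamma> * multi_power (z - y) \<gamma>) has_sum F z) UNIV"
proof -
  have "\<forall>y\<in>K. \<exists>\<rho>>0. \<exists>a. \<forall>z\<in>ball y \<rho>. ((\<lambda>\<gamma>. a \<gamma> * multi_power (z - y) \<gamma>) has_sum F z) UNIV"
    using assms unfolding real_analytic_on_def multi_power_def by simp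
  from bchoice[OF this] obtain \<rho> where \<rho>: "\<forall>y\<in>K. 0 < \<rho> y \<and>
      (\<exists>a. \<forall>z\<in>ball y (\<rho> y). ((\<lambda>\<gamma>. a \<gamma> * multi_power (z - y) \<gamma>) has_sum F z) UNIV)"
    by blast
  then have "\<forall>y\<in>K. \<exists>a. \<forall>z\<in>ball y (\<rho> y). ((\<lambda>\<gamma>. a \<gamma> * multi_power (z - y) \<gamma>) has_sum F z) UNIV"
    by blast
  from bchoice[OF this] obtain a where
      "\<forall>y\<in>K. \<forall>z\<in>ball y (\<rho> y). ((\<lambda>\<gamma>. a y \<gamma> * multi_power (z - y) \<gamma>) has_sum F z) UNIV"
    by blast
  with \<rho> show ?thesis using that by blast
qed

lemma real_analytic_on_subset: "real_analytic_on F W \<Longrightarrow> K \<subseteq> W \<Longrightarrow> real_analytic_on F K"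
  unfolding real_analytic_on_def by blast

lemma compact_ball_cover_uniform_radius:
  fixes K :: "'a::metric_space set"
  assumes "compact K" "\<And>y. y \<in> K \<Longrightarrow> 0 < \<rho> y"
  obtains Y \<rho>0 where "finite Y" "Y \<subseteq> K" "K \<subseteq> (\<Union>y\<in>Y. ball y (\<rho> y))" "0 < \<rho>0" "\<And>y. y \<in> Y \<Longrightarrow> \<rho>0 \<le> \<rho> y"
proof -
  have "K \<subseteq> (\<Union>y\<in>K. ball y (\<rho> y))" using assms(2) by force
  then obtain Y where Y: "Y \<subseteq> K" "finite Y" "K \<subseteq> (\<Union>y\<in>Y. ball y (\<rho> y))"
    using compactE_image[OF assms(1), of K "\<lambda>y. ball y (\<rho> y)"] by auto
  show ?thesis
    by (rule that[OF Y(2,1,3), of "Min (insert 1 (\<rho> ` Y))"]) (use Y assms(2) in auto)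
qed

lemma uniform_majorant_on_compact:
  fixes F :: "real^'n \<Rightarrow> real" and \<mu> :: "'n \<Rightarrow> real^'m"
  assumes "compact K" "real_analytic_on F K"
  obtains r M where "0 < r" "r < 1"
    "\<And>\<beta> x. \<beta> \<in> K \<Longrightarrow> (\<And>l. 0 < x$l) \<Longrightarrow>
       majorized x (r *\<^sub>R x) (\<lambda>x'. F (\<chi> i. \<beta>$i * monom_pow (\<chi> l. x'$l / x$l) (\<mu> i))) M"
proof -
  let ?n = "real CARD('n)"
  obtain \<rho> a where \<rho>: "\<And>y. y \<in> K \<Longrightarrow> 0 < \<rho> y"
    and F: "\<And>y z. y \<in> K \<Longrightarrow> z \<in> ball y (\<rho> y) \<Longrightarrow> ((\<lambda>\<gamma>. a y \<gamma> * multi_power (z - y) \<gamma>) has_sum F z) UNIV"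
    using real_analytic_on_choice[OF assms(2)] by blast
  obtain Bd where Bd: "0 < Bd" "\<And>\<beta>. \<beta> \<in> K \<Longrightarrow> norm \<beta> \<le> Bd"
    using compact_imp_bounded[OF assms(1)] unfolding bounded_pos by blast
  obtain Y \<rho>0 where Y: "finite Y" "Y \<subseteq> K" "K \<subseteq> (\<Union>y\<in>Y. ball y (\<rho> y / (4 * ?n)))"
    and \<rho>0: "0 < \<rho>0" "\<And>y. y \<in> Y \<Longrightarrow> \<rho>0 \<le> \<rho> y / (4 * ?n)"
    by (rule compact_ball_cover_uniform_radius[OF assms(1), of "\<lambda>y. \<rho> y / (4 * ?n)"]) (use \<rho> in auto)
  \<comment> \<open>for this r, substituting the monomial ratios moves each coordinate of \<beta> by at most
    \<rho>0 \<le> \<rho> y / (4 n), n = CARD('n); as dist y \<beta> < \<rho> y / (4 n), the substituted point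
    stays in the ball of convergence at y\<close>
  obtain r where r: "0 < r" "r < 1" "\<And>i. (\<Prod>l\<in>UNIV. binomial_majorant (\<mu> i $ l) r) \<le> 1 + \<rho>0 / Bd"
    using small_radius_binomial_majorant \<rho>0(1) Bd(1) by (metis divide_pos_pos)
  define M where "M = Max (insert 0 ((\<lambda>y. \<Sum>\<^sub>\<infinity>\<gamma>. \<bar>a y \<gamma>\<bar> * multi_power (\<chi> i. \<rho> y / (2 * ?n)) \<gamma>) ` Y))"
  show ?thesis
  proof (rule that[OF r(1,2)])
    fix \<beta> and x :: "real^'m" assume \<beta>: "\<beta> \<in> K" and x: "\<And>l. 0 < x$l"
    obtain y where y: "y \<in> Y" "dist y \<beta> < \<rho> y / (4 * ?n)" using Y(3) \<beta> by auto
    have small: "\<bar>\<beta>$i\<bar> * ((\<Prod>l\<in>UNIV. binomial_majorant (\<mu> i $ l) r) - 1) \<le> \<rho> y / (2 * ?n) / 2" for i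
    proof -
      have "\<bar>\<beta>$i\<bar> * ((\<Prod>l\<in>UNIV. binomial_majorant (\<mu> i $ l) r) - 1) \<le> \<bar>\<beta>$i\<bar> * (\<rho>0 / Bd)"
        using r(3)[of i] by (intro mult_left_mono) auto
      also have "\<dots> \<le> Bd * (\<rho>0 / Bd)"
        using component_le_norm_cart[of \<beta> i] Bd(2)[OF \<beta>] \<rho>0(1) Bd(1) by (intro mult_right_mono) auto
      finally show ?thesis using \<rho>0(2)[OF y(1)] Bd(1) by simp
    qed
    have "?n * (\<rho> y / (2 * ?n)) < \<rho> y" using \<rho> Y(2) y(1) by force
    from majorized_analytic_comp_monom_ratio[OF F[of y] r(1,2) x _ small this]
    show "majorized x (r *\<^sub>R x) (\<lambda>x'. F (\<chi> i. \<beta>$i * monom_pow (\<chi> l. x'$l / x$l) (\<mu> i))) M"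
      by (rule majorized_mono) (use Y y in \<open>auto simp: M_def\<close>)
  qed
qed

lemma bounded_monomial_mapE:
  assumes "bounded_monomial_map U b"
  obtains a \<mu> where "\<And>i t x. (t, x) \<in> U \<Longrightarrow> b t x $ i = a i t * monom_pow x (\<mu> i)"
proof -
  have "\<forall>i. \<exists>a\<mu>. \<forall>(t,x)\<in>U. b t x $ i = fst a\<mu> t * monom_pow x (snd a\<mu>)"
    using assms unfolding bounded_monomial_map_def by fastforce
  then obtain a\<mu> where a\<mu>: "\<And>i t x. (t, x) \<in> U \<Longrightarrow> b t x $ i = fst (a\<mu> i) t * monom_pow x (snd (a\<mu> i))"
    by (metis (mono_tags, lifting) case_prodD choice)
  show ?thesis by (rule that[of "\<lambda>i. fst (a\<mu> i)" "\<lambda>i. snd (a\<mu> i)"]) (rule a\<mu>)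
qed

lemma iter_partial_prepared_bound:
  fixes b :: "real^'k \<Rightarrow> real^'m \<Rightarrow> real^'n"
  assumes b: "\<And>i t x. (t, x) \<in> U \<Longrightarrow> b t x $ i = a i t * monom_pow x (\<mu> i)"
    and prepared: "\<forall>(t,x)\<in>U. f t x = b t x $ j * F (b t x)"
    and fibre: "open {x'. (t, x') \<in> U}" and tx: "(t, x) \<in> U" and x: "\<And>l. 0 < x$l"
    and r: "0 < r" "r < 1"
    and F: "majorized x (r *\<^sub>R x) (\<lambda>x'. F (\<chi> i. b t x $ i * monom_pow (\<chi> l. x'$l / x$l) (\<mu> i))) M"
    and B: "(\<Prod>l\<in>UNIV. binomial_majorant (\<mu> j $ l) r) * M \<le> B"
  shows "\<bar>iter_partial L (f t) x\<bar>
    \<le> (\<Prod>l\<in>UNIV. inverse ((x$l) ^ count_list L l)) * \<bar>b t x $ j\<bar> * B * (1 / r) ^ length L * fact (length L)"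
proof -
  let ?Q = "\<lambda>i x'. monom_pow (\<chi> l. x'$l / x$l) (\<mu> i)"
  let ?H = "\<lambda>x'. b t x $ j * (?Q j x' * F (\<chi> i. b t x $ i * ?Q i x'))"
  have "majorized x (r *\<^sub>R x) ?H (\<bar>b t x $ j\<bar> * ((\<Prod>l\<in>UNIV. binomial_majorant (\<mu> j $ l) r) * M))"
    by (intro majorized_cmult majorized_mult majorized_monom_pow_ratio F r x)
  then have H: "majorized x (r *\<^sub>R x) ?H (\<bar>b t x $ j\<bar> * B)"
    by (rule majorized_mono) (simp add: B mult_left_mono)
  have "iter_partial L (f t) x = iter_partial L ?H x"
  proof (rule iter_partial_cong_open[OF fibre])
    fix x' assume x': "x' \<in> {x'. (t, x') \<in> U}"
    have "b t x' $ i = b t x $ i * ?Q i x'" for i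
      using x' unfolding b[OF tx] mem_Collect_eq
      by (simp add: b monom_pow_ratio[OF x, of x' "\<mu> i"] mult.assoc)
    then have "b t x' = (\<chi> i. b t x $ i * ?Q i x')" by (simp add: vec_eq_iff)
    then show "f t x' = ?H x'" using prepared x' by auto
  qed (use tx in simp)
  then show ?thesis
    using majorized_iter_partial_bound[OF H r(1) x, of L] by (simp add: mult.assoc)
qed

theorem lemma3p4:
  fixes T :: "(real^'k) set"
    and U :: "((real^'k) \<times> (real^'m)) set"
    and f :: "real^'k \<Rightarrow> real^'m \<Rightarrow> real"
    and b :: "real^'k \<Rightarrow> real^'m \<Rightarrow> real^'n"
    and j :: 'n
    and F :: "real^'n \<Rightarrow> real"
  assumes U_sub: "U \<subseteq> T \<times> {x. \<forall>l. 0 < x$l \<and> x$l < 1}"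
    and fibres_open: "\<forall>t\<in>T. open {x. (t,x) \<in> U}"
    and b_mon: "bounded_monomial_map U b"
    and prepared: "\<forall>(t,x)\<in>U. f t x = b t x $ j * F (b t x)"
    and F_an: "\<exists>W. open W \<and> closure ((\<lambda>(t,x). b t x) ` U) \<subseteq> W \<and>
                  real_analytic_on F W \<and> (\<forall>y\<in>W. F y \<noteq> 0)"
  shows "\<exists>A B. A > 0 \<and> B > 0 \<and>
           (\<forall>L t x. t \<in> T \<longrightarrow> (t,x) \<in> U \<longrightarrow>
              \<bar>iter_partial L (f t) x\<bar> \<le>
                (\<Prod>l\<in>UNIV. inverse ((x$l) ^ count_list L l)) * \<bar>b t x $ j\<bar>
                * B * A ^ length L * fact (length L))"
proof -
  let ?img = "(\<lambda>(t,x). b t x) ` U"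
  obtain a \<mu> where b: "\<And>i t x. (t, x) \<in> U \<Longrightarrow> b t x $ i = a i t * monom_pow x (\<mu> i)"
    by (rule bounded_monomial_mapE[OF b_mon]) blast
  obtain W where W: "closure ?img \<subseteq> W" "real_analytic_on F W" using F_an by blast
  have K: "compact (closure ?img)" using b_mon unfolding bounded_monomial_map_def by simp
  obtain r M where r: "0 < r" "r < 1" and M: "\<And>\<beta> x. \<beta> \<in> closure ?img \<Longrightarrow> (\<And>l. 0 < x$l) \<Longrightarrow>
      majorized x (r *\<^sub>R x) (\<lambda>x'. F (\<chi> i. \<beta>$i * monom_pow (\<chi> l. x'$l / x$l) (\<mu> i))) M"
    by (rule uniform_majorant_on_compact[where \<mu>=\<mu>, OF K real_analytic_on_subset[OF W(2,1)]]) blast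
  define B where "B = max 1 ((\<Prod>l\<in>UNIV. binomial_majorant (\<mu> j $ l) r) * M)"
  have "\<bar>iter_partial L (f t) x\<bar> \<le> (\<Prod>l\<in>UNIV. inverse ((x$l) ^ count_list L l)) * \<bar>b t x $ j\<bar>
      * B * (1 / r) ^ length L * fact (length L)" if t: "t \<in> T" and tx: "(t, x) \<in> U" for L t x
  proof (rule iter_partial_prepared_bound[OF b prepared _ tx _ r])
    show "open {x'. (t, x') \<in> U}" using fibres_open t by blast
    show x: "0 < x$l" for l using U_sub tx by auto
    have "b t x \<in> closure ?img" using tx by (auto intro: closure_subset[THEN subsetD])
    then show "majorized x (r *\<^sub>R x) (\<lambda>x'. F (\<chi> i. b t x $ i * monom_pow (\<chi> l. x'$l / x$l) (\<mu> i))) M"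
      using M x by blast
    show "(\<Prod>l\<in>UNIV. binomial_majorant (\<mu> j $ l) r) * M \<le> B"
      unfolding B_def by (rule max.cobounded2)
  qed
  then show ?thesis
    using r by (intro exI[of _ "1 / r"] exI[of _ B]) (auto simp: B_def)
qed

end
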